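(* Let $q=p^m$ with $p$ prime and let $(k,q)$ be a semiprimitive pair. Then $\Gamma(k,q)$ is Ramanujan if and only if either $k=2$ (the classical Paley graph, $q\equiv1\pmod4$), or $m$ is even and $(k,p,m)$ satisfies one of: (a) $k=3$, $p=2$, $m\ge4$; (b) $k=3$, $p\ne2$, $p\equiv2\pmod3$, $m\ge2$; (c) $k=4$, $p=3$, $m\ge4$; (d) $k=4$, $p\ne3$, $p\equiv3\pmod4$, $m\ge2$; (e) $k=5$, $p=2$, $m\ge8$, $4\mid m$; (f) $k=5$, $p\ne2$, $p\equiv2,3\pmod5$, $m\ge4$, $4\mid m$; (g) $k=5$, $p\equiv4\pmod5$, $m\ge2$. Moreover, $\bar\Gamma(k,q)$ is Ramanujan for every semiprimitive pair $(k,q)$.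
   Context: Let $p$ be prime, $q=p^m$, $k\mid q-1$, $R_k=\{x^k:x\in\mathbb F_q^*\}$. $\Gamma(k,q)$ is the Cayley graph on $\mathbb F_q$ with $u\to v$ an edge iff $v-u\in R_k$; $\bar\Gamma(k,q)$ is the Cayley graph on $\mathbb F_q$ with connection set $\mathbb F_q^*\setminus R_k$. A pair $(k,q)$ is a semiprimitive pair if either $k=2$ and $q\equiv1\pmod4$, or $k>2$, $k\mid p^t+1$ for some $t\mid\frac m2$, and $k\ne p^{m/2}+1$. A connected $N$-regular graph $\Gamma$ is Ramanujan if $\max\{|\lambda|:\lambda\text{ eigenvalue of }\Gamma,\ |\lambda|\ne N\}\le 2\sqrt{N-1}$. *)

theory Defs
  imports Complex_Main "HOL-Computational_Algebra.Primes"
begin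

definition kth_powers :: "nat \<Rightarrow> 'a::{finite,field} set" where
  "kth_powers k = {x ^ k | x. x \<noteq> 0}"

definition gpaley :: "nat \<Rightarrow> 'a::{finite,field} \<Rightarrow> 'a \<Rightarrow> bool" where
  "gpaley k u v \<longleftrightarrow> v - u \<in> kth_powers k"

definition gpaley_bar :: "nat \<Rightarrow> 'a::{finite,field} \<Rightarrow> 'a \<Rightarrow> bool" where
  "gpaley_bar k u v \<longleftrightarrow> v - u \<noteq> 0 \<and> v - u \<notin> kth_powers k"

definition adj_eigenvalue :: "('a::finite \<Rightarrow> 'a \<Rightarrow> bool) \<Rightarrow> complex \<Rightarrow> bool" where
  "adj_eigenvalue E mu \<longleftrightarrow>
     (\<exists>v :: 'a \<Rightarrow> complex. v \<noteq> (\<lambda>_. 0) \<and>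
        (\<forall>u. (\<Sum>w\<in>{w. E u w}. v w) = mu * v u))"

definition connected_graph :: "('a \<Rightarrow> 'a \<Rightarrow> bool) \<Rightarrow> bool" where
  "connected_graph E \<longleftrightarrow> (\<forall>u v. E\<^sup>*\<^sup>* u v)"

definition regular_graph :: "('a::finite \<Rightarrow> 'a \<Rightarrow> bool) \<Rightarrow> nat \<Rightarrow> bool" where
  "regular_graph E N \<longleftrightarrow> (\<forall>u. card {w. E u w} = N)"

definition ramanujan :: "('a::finite \<Rightarrow> 'a \<Rightarrow> bool) \<Rightarrow> bool" where
  "ramanujan E \<longleftrightarrow> connected_graph E \<and>
     (\<exists>N. regular_graph E N \<and>
        (\<forall>mu. adj_eigenvalue E mu \<and> cmod mu \<noteq> real N \<longrightarrow> cmod mu \<le> 2 * sqrt (real N - 1)))"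

definition semiprimitive_pair :: "nat \<Rightarrow> nat \<Rightarrow> nat \<Rightarrow> bool" where
  "semiprimitive_pair k p m \<longleftrightarrow>
     (k = 2 \<and> (p ^ m) mod 4 = 1) \<or>
     (k > 2 \<and> even m \<and> (\<exists>t. t > 0 \<and> t dvd (m div 2) \<and> k dvd p ^ t + 1) \<and> k \<noteq> p ^ (m div 2) + 1)"

end

theory Submission
  imports Defs "HOL-Algebra.Algebraic_Closure_Type" "HOL-Number_Theory.Residues"
begin

hide_const (open) Divisibility.prime

lemma power_ring_of_type_algebra:
  "x [^]\<^bsub>ring_of_type_algebra\<^esub> (n::nat) = (x::'a::field) ^ n"
  by (induction n) (auto simp: ring_of_type_algebra_def)

lemma finite_field_has_generator:
  "\<exists>g::'a::{finite,field}. g \<noteq> 0 \<and> (\<forall>x. x \<noteq> 0 \<longrightarrow> (\<exists>i. x = g ^ i))"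
proof -
  interpret F: field "ring_of_type_algebra :: 'a ring" by (rule field_from_type_algebra)
  have "finite (carrier (ring_of_type_algebra :: 'a ring))"
    by (simp add: ring_of_type_algebra_def)
  then have "\<exists>a\<in>UNIV - {0::'a}. UNIV - {0} = {a ^ i | i::nat. i \<in> UNIV}"
    using F.finite_field_mult_group_has_gen
    unfolding power_ring_of_type_algebra by (simp add: ring_of_type_algebra_def)
  then obtain a :: 'a where a: "a \<in> UNIV - {0}" and gen: "UNIV - {0} = {a ^ i | i::nat. i \<in> UNIV}"
    by (rule bexE)
  show ?thesis
  proof (rule exI[of _ a], intro conjI allI impI)
    show "a \<noteq> 0" using a by simp
    fix x :: 'a
    assume "x \<noteq> 0"
    then have "x \<in> {a ^ i | i::nat. i \<in> UNIV}" unfolding gen[symmetric] by simp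
    then show "\<exists>i. x = a ^ i" by simp
  qed
qed

lemma nonzero_power_card_minus_1:
  fixes x :: "'a::{finite,field}"
  assumes "x \<noteq> 0"
  shows "x ^ (card (UNIV :: 'a set) - 1) = 1"
proof -
  interpret F: field "ring_of_type_algebra :: 'a ring" by (rule field_from_type_algebra)
  let ?M = "Multiplicative_Group.mult_of (ring_of_type_algebra :: 'a ring)"
  interpret M: group ?M by (rule F.field_mult_group)
  have "x [^]\<^bsub>?M\<^esub> Coset.order ?M = \<one>\<^bsub>?M\<^esub>"
    using assms by (intro M.pow_order_eq_1) (simp add: ring_of_type_algebra_def)
  moreover have "Coset.order ?M = card (UNIV :: 'a set) - 1"
    by (simp add: Coset.order_def ring_of_type_algebra_def)
  ultimately show ?thesis
    by (simp add: Multiplicative_Group.nat_pow_mult_of power_ring_of_type_algebra)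
      (simp add: ring_of_type_algebra_def)
qed

lemma nat_power_minus_1_dvd: "(a::nat) - 1 dvd a ^ r - 1"
proof (induction r)
  case 0 then show ?case by simp
next
  case (Suc r)
  show ?case
  proof (cases "a = 0")
    case True then show ?thesis by simp
  next
    case False
    have "a ^ Suc r - 1 = a * (a ^ r - 1) + (a - 1)"
      using False by (simp add: algebra_simps diff_mult_distrib2)
    then show ?thesis using Suc by simp
  qed
qed

lemma square_minus_1_nat: "(a::nat) * a - 1 = (a + 1) * (a - 1)"
  by (cases a) (simp_all add: algebra_simps)

lemma multiplicative_unitary:
  fixes f :: "'b::field \<Rightarrow> complex"
  assumes mult: "\<And>x y. x \<noteq> 0 \<Longrightarrow> y \<noteq> 0 \<Longrightarrow> f (x * y) = f x * f y"
    and nrm: "\<And>x. x \<noteq> 0 \<Longrightarrow> norm (f x) = 1"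
  shows "f 1 = 1" and "x \<noteq> 0 \<Longrightarrow> y \<noteq> 0 \<Longrightarrow> f x * cnj (f y) = f (x / y)"
proof -
  have "f 1 = f 1 * f 1" using mult[of 1 1] by simp
  moreover have "f 1 \<noteq> 0" using nrm[of 1] by auto
  ultimately show "f 1 = 1" by simp
  assume xy: "x \<noteq> 0" "y \<noteq> 0"
  have "f (x / y) * f y = f x" using mult[of "x / y" y] xy by simp
  moreover have "f y \<noteq> 0" using nrm[OF xy(2)] by auto
  ultimately have "f (x / y) = f x / f y" by (simp add: field_simps)
  then show "f x * cnj (f y) = f (x / y)" using divide_conv_cnj[OF nrm[OF xy(2)]] by simp
qed

lemma cmod_minus_1_plus_minus_bounds:
  fixes n :: nat and z :: complex
  assumes "n \<ge> 1" "z = - 1 + of_nat n \<or> z = - 1 - of_nat n"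
  shows "real n - 1 \<le> cmod z" "cmod z \<le> real n + 1"
proof -
  from assms(2) have "z = of_nat (n - 1) \<or> z = - of_nat (n + 1)"
    using assms(1) by (auto simp: of_nat_diff)
  then have "cmod z = real (n - 1) \<or> cmod z = real n + 1"
    by (metis norm_minus_cancel norm_of_nat of_nat_Suc add.commute Suc_eq_plus1)
  then show "real n - 1 \<le> cmod z" "cmod z \<le> real n + 1"
    using assms(1) by (auto simp: of_nat_diff)
qed

lemma quadratic_roots_cases:
  fixes a b x1 x2 r :: "'a::field"
  assumes "x1 \<noteq> x2" "x1 * x1 - a * x1 + b = 0" "x2 * x2 - a * x2 + b = 0" "r * r - a * r + b = 0"
  shows "r = x1 \<or> r = x2"
proof -
  have "(x1 - x2) * (x1 + x2 - a) = (x1 * x1 - a * x1 + b) - (x2 * x2 - a * x2 + b)" by (simp add: algebra_simps)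
  then have "(x1 - x2) * (x1 + x2 - a) = 0" using assms(2,3) by simp
  then have a: "a = x1 + x2" using assms(1) by simp
  have e: "x1 * x1 - (x1 + x2) * x1 + b = 0" using assms(2) a by simp
  have "b = (x1 * x1 - (x1 + x2) * x1 + b) + x1 * x2" by (simp add: algebra_simps)
  also have "\<dots> = x1 * x2" unfolding e by simp
  finally have b: "b = x1 * x2" .
  have "(r - x1) * (r - x2) = r * r - (x1 + x2) * r + x1 * x2" by (simp add: algebra_simps)
  then have "(r - x1) * (r - x2) = 0" using assms(4) a b by simp
  then show ?thesis by simp
qed

lemma card_quadratic_roots_le_2:
  fixes a b :: "'a::{finite,field}"
  shows "card {x. x * x - a * x + b = 0} \<le> 2"
proof (cases "\<exists>x1 x2. x1 \<noteq> x2 \<and> x1 \<in> {x. x * x - a * x + b = 0} \<and> x2 \<in> {x. x * x - a * x + b = 0}")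
  case True
  then obtain x1 x2 where x: "x1 \<noteq> x2" "x1 * x1 - a * x1 + b = 0" "x2 * x2 - a * x2 + b = 0" by auto
  have "{x. x * x - a * x + b = 0} \<subseteq> {x1, x2}" using quadratic_roots_cases[OF x] by auto
  then have "card {x. x * x - a * x + b = 0} \<le> card {x1, x2}" by (intro card_mono) auto
  moreover have "card {x1, x2} = 2" using x(1) by simp
  ultimately show ?thesis by simp
next
  case False
  then have "card {x. x * x - a * x + b = 0} \<le> Suc 0" by (subst card_le_Suc0_iff_eq) auto
  then show ?thesis by simp
qed

lemma sum_by_fibres:
  fixes F :: "'b \<Rightarrow> 'c::comm_semiring_1"
  assumes "finite S" "finite T" "g ` S \<subseteq> T"
  shows "(\<Sum>x\<in>S. F (g x)) = (\<Sum>y\<in>T. of_nat (card {x\<in>S. g x = y}) * F y)"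
proof -
  have "(\<Sum>x\<in>S. F (g x)) = (\<Sum>y\<in>T. \<Sum>x\<in>{x\<in>S. g x = y}. F (g x))"
    using sum.group[OF assms, of "\<lambda>x. F (g x)"] by simp
  also have "\<dots> = (\<Sum>y\<in>T. of_nat (card {x\<in>S. g x = y}) * F y)"
    by (intro sum.cong refl) simp
  finally show ?thesis .
qed

lemma sum_remove_zero:
  fixes h :: "'a::zero \<Rightarrow> 'b::ab_group_add"
  assumes "finite A" "h 0 = 0"
  shows "(\<Sum>x\<in>A. h x) = (\<Sum>x\<in>A - {0}. h x)"
  using assms by (simp add: sum_diff1)

definition root_unity :: "nat \<Rightarrow> complex" where "root_unity N = cis (2 * pi / N)"

lemma root_unity_power: "root_unity N ^ j = cis (2 * pi * j / N)"
  unfolding root_unity_def DeMoivre by (rule arg_cong[where f=cis]) (simp add: field_simps)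

lemma root_unity_power_self: "N > 0 \<Longrightarrow> root_unity N ^ N = 1"
  by (simp add: root_unity_power)

lemma root_unity_power_mod: "N > 0 \<Longrightarrow> root_unity N ^ j = root_unity N ^ (j mod N)"
proof -
  assume N: "N > 0"
  have "root_unity N ^ j = root_unity N ^ (N * (j div N) + j mod N)" by simp
  also have "\<dots> = root_unity N ^ (j mod N)" by (simp only: power_add power_mult root_unity_power_self[OF N]) simp
  finally show ?thesis .
qed

lemma root_unity_power_eq_1_iff: "N > 0 \<Longrightarrow> root_unity N ^ j = 1 \<longleftrightarrow> N dvd j"
proof
  assume N: "N > 0" and e: "root_unity N ^ j = 1"
  have "cos (2 * pi * j / N) = 1" using arg_cong[OF e, of Re] by (simp add: root_unity_power cis.sel)
  then obtain z :: int where z: "2 * pi * j / N = of_int z * 2 * pi" using cos_one_2pi_int[of "2 * pi * j / N"] by blast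
  then have "real j = z * N" using N by (simp add: field_simps)
  then have "int j = z * int N" by (metis of_int_eq_iff of_int_mult of_int_of_nat_eq)
  then show "N dvd j" by (metis dvd_triv_right int_dvd_int_iff)
next
  assume "N > 0" "N dvd j"
  then show "root_unity N ^ j = 1" using root_unity_power_mod[of N j] by simp
qed

lemma root_unity_power_eq_iff: "N > 0 \<Longrightarrow> root_unity N ^ a = root_unity N ^ b \<longleftrightarrow> a mod N = b mod N"
proof -
  assume N: "N > 0"
  have nz: "root_unity N \<noteq> 0" by (simp add: root_unity_def)
  show ?thesis
  proof (cases "a \<le> b")
    case True
    have "root_unity N ^ b = root_unity N ^ a * root_unity N ^ (b - a)" using True by (simp flip: power_add)
    then have "root_unity N ^ a = root_unity N ^ b \<longleftrightarrow> root_unity N ^ (b - a) = 1" using nz by auto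
    then show ?thesis using root_unity_power_eq_1_iff[OF N] mod_eq_dvd_iff_nat[OF True] by metis
  next
    case False
    then have F: "b \<le> a" by simp
    have "root_unity N ^ a = root_unity N ^ b * root_unity N ^ (a - b)" using F by (simp flip: power_add)
    then have "root_unity N ^ a = root_unity N ^ b \<longleftrightarrow> root_unity N ^ (a - b) = 1" using nz by auto
    then show ?thesis using root_unity_power_eq_1_iff[OF N] mod_eq_dvd_iff_nat[OF F] by metis
  qed
qed

lemma norm_root_unity_power [simp]: "norm (root_unity N ^ j) = 1" by (simp add: root_unity_power)

lemma sum_powers_root_of_unity: "(z::complex) ^ M = 1 \<Longrightarrow> z \<noteq> 1 \<Longrightarrow> (\<Sum>i<M. z ^ i) = 0"
  by (simp add: geometric_sum)

section \<open>Connectivity of Cayley graphs on finite fields\<close>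

lemma cayley_reach_shift:
  fixes S :: "'a::ab_group_add set"
  assumes "(\<lambda>u w. w - u \<in> S)\<^sup>*\<^sup>* a b"
  shows "(\<lambda>u w. w - u \<in> S)\<^sup>*\<^sup>* (a + c) (b + c)"
  using assms
proof (induction rule: rtranclp_induct)
  case (step y z)
  have "(z + c) - (y + c) \<in> S" using step(2) by simp
  then show ?case using step(3) by (simp add: rtranclp.rtrancl_into_rtrancl)
qed simp

lemma cayley_reach_add:
  fixes S :: "'a::ab_group_add set"
  assumes "(\<lambda>u w. w - u \<in> S)\<^sup>*\<^sup>* 0 x" "(\<lambda>u w. w - u \<in> S)\<^sup>*\<^sup>* 0 y"
  shows "(\<lambda>u w. w - u \<in> S)\<^sup>*\<^sup>* 0 (x + y)"
proof -
  have "(\<lambda>u w. w - u \<in> S)\<^sup>*\<^sup>* (0 + x) (y + x)" by (rule cayley_reach_shift[OF assms(2)])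
  then show ?thesis using assms(1) by (simp add: add.commute)
qed

lemma cayley_reach_step:
  fixes S :: "'a::ab_group_add set"
  shows "s \<in> S \<Longrightarrow> (\<lambda>u w. w - u \<in> S)\<^sup>*\<^sup>* 0 s"
  by (rule r_into_rtranclp) simp

lemma connected_cayleyI:
  fixes S :: "'a::ab_group_add set"
  assumes "\<And>x. (\<lambda>u w. w - u \<in> S)\<^sup>*\<^sup>* 0 x"
  shows "connected_graph (\<lambda>u w. w - u \<in> S)"
  unfolding connected_graph_def
proof (intro allI)
  fix u v :: 'a
  have "(\<lambda>u w. w - u \<in> S)\<^sup>*\<^sup>* (0 + u) ((v - u) + u)" by (rule cayley_reach_shift[OF assms])
  then show "(\<lambda>u w. w - u \<in> S)\<^sup>*\<^sup>* u v" by simp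
qed

text \<open>If \<open>0 \<union> S\<close> fills more than half of the group, every \<open>x\<close> is a sum \<open>a + a'\<close> of two elements of it.\<close>
lemma connected_cayley_of_card:
  fixes S :: "'a::{finite,ab_group_add} set"
  assumes "2 * card (insert 0 S) > card (UNIV :: 'a set)"
  shows "connected_graph (\<lambda>u w. w - u \<in> S)"
proof (rule connected_cayleyI)
  fix x :: 'a
  define A where "A = insert 0 S"
  define B where "B = (\<lambda>a. x - a) ` A"
  have "inj_on (\<lambda>a. x - a) A" by (rule inj_onI) simp
  then have cB: "card B = card A" by (simp add: B_def card_image)
  have "A \<inter> B \<noteq> {}"
  proof
    assume "A \<inter> B = {}"
    then have "card (A \<union> B) = card A + card B" by (simp add: card_Un_disjoint)
    moreover have "card (A \<union> B) \<le> card (UNIV :: 'a set)" by (rule card_mono) auto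
    ultimately show False using assms cB by (simp add: A_def)
  qed
  then obtain a a' where a: "a \<in> A" "a' \<in> A" "a = x - a'" by (auto simp: B_def)
  have r: "(\<lambda>u w. w - u \<in> S)\<^sup>*\<^sup>* 0 y" if "y \<in> A" for y
    using that cayley_reach_step by (auto simp: A_def)
  have "x = a + a'" using a(3) by simp
  then show "(\<lambda>u w. w - u \<in> S)\<^sup>*\<^sup>* 0 x" using cayley_reach_add[OF r[OF a(1)] r[OF a(2)]] by simp
qed

lemma card_proper_subfield_square_le:
  fixes C :: "'a::{finite,field} set"
  assumes diff: "\<And>x y. x \<in> C \<Longrightarrow> y \<in> C \<Longrightarrow> x - y \<in> C"
    and divide: "\<And>x y. x \<in> C \<Longrightarrow> y \<in> C \<Longrightarrow> y \<noteq> 0 \<Longrightarrow> x / y \<in> C"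
    and proper: "C \<noteq> UNIV"
  shows "card C * card C \<le> card (UNIV :: 'a set)"
proof -
  obtain \<alpha> where \<alpha>: "\<alpha> \<notin> C" using proper by auto
  have "inj_on (\<lambda>(a, b). a + b * \<alpha>) (C \<times> C)"
  proof (rule inj_onI, clarsimp)
    fix a b a' b'
    assume ab: "a \<in> C" "b \<in> C" "a' \<in> C" "b' \<in> C" and e: "a + b * \<alpha> = a' + b' * \<alpha>"
    show "a = a' \<and> b = b'"
    proof (cases "b = b'")
      case False
      then have "\<alpha> = (a' - a) / (b - b')" using e by (simp add: field_simps)
      then show ?thesis using \<alpha> ab False by (metis diff divide eq_iff_diff_eq_0)
    qed (use e in simp)
  qed
  then have "card (C \<times> C) \<le> card (UNIV :: 'a set)"
    using card_image card_mono[of UNIV "(\<lambda>(a, b). a + b * \<alpha>) ` (C \<times> C)"] by fastforce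
  then show ?thesis by (simp add: card_cartesian_product)
qed

lemma cayley_reach_mult:
  fixes S :: "'a::field set"
  assumes mult: "\<And>s t. s \<in> S \<Longrightarrow> t \<in> S \<Longrightarrow> s * t \<in> S"
    and c: "(\<lambda>u w. w - u \<in> S)\<^sup>*\<^sup>* 0 c" and x: "(\<lambda>u w. w - u \<in> S)\<^sup>*\<^sup>* 0 x"
  shows "(\<lambda>u w. w - u \<in> S)\<^sup>*\<^sup>* 0 (c * x)"
proof -
  let ?R = "(\<lambda>u w. w - u \<in> S)\<^sup>*\<^sup>* 0"
  have left: "?R (s * y)" if s: "s \<in> S" and y: "?R y" for s y
    using y
  proof (induction rule: rtranclp_induct)
    case (step y z)
    have "s * (z - y) \<in> S" using step(2) s mult by simp
    then have "?R (s * y + s * (z - y))" using step(3) cayley_reach_add cayley_reach_step by blast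
    then show ?case by (simp add: algebra_simps)
  qed simp
  from c show ?thesis
  proof (induction rule: rtranclp_induct)
    case (step y z)
    have "?R (y * x + (z - y) * x)"
      using step(3) left[OF step(2) x] cayley_reach_add by blast
    then show ?case by (simp add: algebra_simps)
  qed simp
qed

lemma cayley_reach_uminus:
  fixes S :: "'a::{finite,field} set"
  assumes "(\<lambda>u w. w - u \<in> S)\<^sup>*\<^sup>* 0 x"
  shows "(\<lambda>u w. w - u \<in> S)\<^sup>*\<^sup>* 0 (- x)"
proof -
  have "(\<lambda>u w. w - u \<in> S)\<^sup>*\<^sup>* 0 (of_nat j * x)" for j
  proof (induction j)
    case (Suc j)
    then show ?case using cayley_reach_add[OF Suc assms] by (simp add: distrib_right add.commute)
  qed simp
  moreover have "CHAR('a) > 0" by (rule finite_imp_CHAR_pos) simp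
  then have "(of_nat (CHAR('a) - 1) :: 'a) = - 1" by (simp add: of_nat_diff)
  ultimately show ?thesis by (metis mult_minus1)
qed

text \<open>For a multiplicatively closed connection set containing 1, the vertices reachable from 0
  form a subfield; inverses come from \<open>x\<inverse> = x ^ (CARD - 2)\<close>.\<close>
lemma cayley_reachable_subfield:
  fixes S :: "'a::{finite,field} set"
  assumes mult: "\<And>s t. s \<in> S \<Longrightarrow> t \<in> S \<Longrightarrow> s * t \<in> S" and one: "1 \<in> S"
  defines "C \<equiv> {x. (\<lambda>u w. w - u \<in> S)\<^sup>*\<^sup>* 0 x}"
  shows "\<And>x y. x \<in> C \<Longrightarrow> y \<in> C \<Longrightarrow> x - y \<in> C"
    and "\<And>x y. x \<in> C \<Longrightarrow> y \<in> C \<Longrightarrow> y \<noteq> 0 \<Longrightarrow> x / y \<in> C"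
proof -
  have power: "x ^ j \<in> C" if "x \<in> C" for x j
  proof (induction j)
    case (Suc j)
    then show ?case using cayley_reach_mult[OF mult] that by (simp add: C_def)
  qed (use one cayley_reach_step in \<open>simp add: C_def\<close>)
  have inverse: "inverse x \<in> C" if "x \<in> C" "x \<noteq> 0" for x
  proof -
    have "card (UNIV :: 'a set) \<ge> 2"
      using card_mono[of UNIV "{0, 1::'a}"] by simp
    then have "card (UNIV :: 'a set) - 1 = Suc (card (UNIV :: 'a set) - 2)" by simp
    then have "x * x ^ (card (UNIV :: 'a set) - 2) = 1"
      using nonzero_power_card_minus_1[OF that(2)] by simp
    then have "inverse x = x ^ (card (UNIV :: 'a set) - 2)" by (simp add: inverse_unique)
    then show ?thesis using power[OF that(1)] by simp
  qed
  show "x - y \<in> C" if "x \<in> C" "y \<in> C" for x y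
    using cayley_reach_add[OF _ cayley_reach_uminus[of S y]] that by (simp add: C_def)
  show "x / y \<in> C" if "x \<in> C" "y \<in> C" "y \<noteq> 0" for x y
    using cayley_reach_mult[OF mult, of x "inverse y"] inverse[OF that(2,3)] that(1)
    by (simp add: C_def divide_inverse)
qed

section \<open>Arithmetic of semiprimitive pairs\<close>

lemma plus_1_dvd_odd_power_plus_1:
  fixes x :: nat
  assumes "odd n"
  shows "x + 1 dvd x ^ n + 1"
proof -
  have "[int x = - 1] (mod int x + 1)"
    unfolding cong_iff_dvd_diff by simp
  then have "[int x ^ n = (- 1) ^ n] (mod int x + 1)"
    by (rule cong_pow)
  moreover have "(- 1 :: int) ^ n = - 1"
    using assms by simp
  ultimately have "int x + 1 dvd int x ^ n + 1"
    by (simp only: cong_iff_dvd_diff diff_minus_eq_add)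
  then have "int (x + 1) dvd int (x ^ n + 1)"
    unfolding of_nat_add of_nat_power of_nat_1 .
  then show ?thesis
    by (simp only: int_dvd_int_iff)
qed

lemma semiprimitive_level_decomp:
  fixes p k t s :: nat
  assumes "t > 0" "t dvd s" "s > 0" "k dvd p ^ t + 1"
  obtains d0 J where "d0 > 0" "J \<ge> 1" "2 * s = d0 * 2 ^ J" "k dvd p ^ d0 + 1"
proof -
  obtain r where r: "s = t * r" using assms(2) by blast
  then have "r \<noteq> 0" using assms(3) by auto
  obtain od where "r = 2 ^ multiplicity 2 r * od" "odd od"
  proof (rule multiplicity_decompose'[OF \<open>r \<noteq> 0\<close>, where p = 2])
    show "\<not> is_unit (2::nat)" by simp
  qed (rule that)
  then obtain e od where od: "r = 2 ^ e * od" "odd od" by blast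
  have "p ^ t + 1 dvd (p ^ t) ^ od + 1"
    using od(2) by (rule plus_1_dvd_odd_power_plus_1)
  then have "k dvd p ^ (t * od) + 1"
    using assms(4) by (simp add: power_mult dvd_trans)
  moreover have "2 * s = (t * od) * 2 ^ Suc e"
    using r od(1) by (simp add: mult_ac)
  moreover have "t * od > 0"
    using assms(1) od(2) by (cases od) auto
  ultimately show ?thesis
    by (intro that[of "t * od" "Suc e"]) simp_all
qed

lemma semiprimitive_k_le:
  fixes p k t s :: nat
  assumes "prime p" "t > 0" "t dvd s" "s > 0" "k dvd p ^ t + 1" "k \<noteq> p ^ s + 1"
  shows "k \<le> p ^ s"
proof -
  have "k \<le> p ^ t + 1" using assms(5) by (rule dvd_imp_le) simp
  moreover have "p ^ t \<le> p ^ s" using assms prime_gt_1_nat[OF assms(1)]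
    by (intro power_increasing) (auto dest: dvd_imp_le)
  ultimately show ?thesis using assms(6) by linarith
qed

lemma not_dvd_power_plus_1_if_mod_eq_0:
  fixes p n t :: nat
  assumes "p mod n = 0" "n > 1" "t > 0"
  shows "\<not> n dvd p ^ t + 1"
proof
  assume "n dvd p ^ t + 1"
  moreover have "n dvd p ^ t"
    using assms(1,3) by (metis dvd_power dvd_trans mod_0_imp_dvd)
  ultimately have "n dvd 1" by (metis dvd_add_right_iff)
  then show False using assms(2) by simp
qed

lemma not_dvd_power_plus_1_if_mod_eq_1:
  fixes p n t :: nat
  assumes "p mod n = 1" "n > 2"
  shows "\<not> n dvd p ^ t + 1"
proof -
  have "[p = 1] (mod n)" using assms by (simp add: cong_def)
  then have "[p ^ t = 1 ^ t] (mod n)" by (rule cong_pow)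
  then have "p ^ t mod n = 1" using assms(2) by (simp add: cong_def)
  have "(p ^ t + 1) mod n = (p ^ t mod n + 1) mod n"
    by (rule mod_add_left_eq[symmetric])
  also have "\<dots> = 2"
    using \<open>p ^ t mod n = 1\<close> assms(2) by simp
  finally show ?thesis by (simp add: dvd_eq_mod_eq_0)
qed

lemma semiprimitive_3_cases:
  fixes p m t :: nat
  assumes m: "m > 0" "even m" and t: "t > 0" "t dvd m div 2"
    and k: "3 dvd p ^ t + 1" "3 \<noteq> p ^ (m div 2) + 1"
  shows "(p = 2 \<and> m \<ge> 4) \<or> (p \<noteq> 2 \<and> p mod 3 = 2 \<and> m \<ge> 2)"
proof -
  have "p mod 3 \<noteq> 0" "p mod 3 \<noteq> 1"
    using not_dvd_power_plus_1_if_mod_eq_0[of p 3 t] not_dvd_power_plus_1_if_mod_eq_1[of p 3 t] t k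
    by auto
  then have "p mod 3 = 2" by linarith
  moreover have "m \<ge> 4" if "p = 2"
  proof (rule ccontr)
    assume "\<not> m \<ge> 4"
    then have "m = 2" using m by presburger
    then show False using k(2) that by simp
  qed
  ultimately show ?thesis using m by (auto elim!: evenE)
qed

lemma semiprimitive_4_cases:
  fixes p m t :: nat
  assumes m: "m > 0" "even m" and t: "t > 0" "t dvd m div 2"
    and k: "4 dvd p ^ t + 1" "4 \<noteq> p ^ (m div 2) + 1"
  shows "(p = 3 \<and> m \<ge> 4) \<or> (p \<noteq> 3 \<and> p mod 4 = 3 \<and> m \<ge> 2)"
proof -
  have "even (p ^ t + 1)" using k(1) by (rule dvd_trans[rotated]) simp
  then have "odd p" using t(1) by simp
  then have "p mod 4 = 1 \<or> p mod 4 = 3" by presburger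
  then have "p mod 4 = 3"
    using not_dvd_power_plus_1_if_mod_eq_1[of p 4 t] k(1) by auto
  moreover have "m \<ge> 4" if "p = 3"
  proof (rule ccontr)
    assume "\<not> m \<ge> 4"
    then have "m = 2" using m by presburger
    then show False using k(2) that by simp
  qed
  ultimately show ?thesis using m by (auto elim!: evenE)
qed

lemma power_mod_5_ne_4:
  fixes p t :: nat
  assumes p: "p mod 5 = 2 \<or> p mod 5 = 3" and t: "odd t"
  shows "p ^ t mod 5 \<noteq> 4"
proof -
  obtain i where i: "t = 2 * i + 1" using t oddE by blast
  have "p\<^sup>2 mod 5 = (p mod 5)\<^sup>2 mod 5" by (simp add: power_mod)
  then have p2: "p\<^sup>2 mod 5 = 4" using p by auto
  have four: "(4::nat) ^ i mod 5 = 1 \<or> (4::nat) ^ i mod 5 = 4"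
  proof (induction i)
    case (Suc i)
    have "(4::nat) ^ Suc i mod 5 = (4 * (4 ^ i mod 5)) mod 5" by (simp add: mod_mult_right_eq)
    then show ?case using Suc by auto
  qed simp
  have "p ^ t = p * (p\<^sup>2) ^ i" by (simp add: i power_add power_mult[symmetric] mult.commute)
  then have "p ^ t mod 5 = (p * ((p\<^sup>2 mod 5) ^ i mod 5)) mod 5"
    by (simp add: mod_mult_right_eq power_mod)
  also have "\<dots> = (p * 4 ^ i) mod 5"
    by (simp add: p2 mod_mult_right_eq)
  also have "\<dots> = ((p mod 5) * (4 ^ i mod 5)) mod 5"
    by (simp add: mod_mult_eq)
  finally show ?thesis using p four by auto
qed

lemma semiprimitive_5_cases:
  fixes p m t :: nat
  assumes m: "m > 0" "even m" and t: "t > 0" "t dvd m div 2"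
    and k: "5 dvd p ^ t + 1" "5 \<noteq> p ^ (m div 2) + 1"
  shows "(p = 2 \<and> m \<ge> 8 \<and> 4 dvd m) \<or>
    (p \<noteq> 2 \<and> (p mod 5 = 2 \<or> p mod 5 = 3) \<and> m \<ge> 4 \<and> 4 dvd m) \<or> (p mod 5 = 4 \<and> m \<ge> 2)"
proof -
  have "p mod 5 \<noteq> 0" "p mod 5 \<noteq> 1"
    using not_dvd_power_plus_1_if_mod_eq_0[of p 5 t] not_dvd_power_plus_1_if_mod_eq_1[of p 5 t] t k
    by auto
  then consider "p mod 5 = 4" | "p mod 5 = 2 \<or> p mod 5 = 3" by linarith
  then show ?thesis
  proof cases
    case 1
    then show ?thesis using m by (auto elim!: evenE)
  next
    case 2
    have "p ^ t mod 5 = 4" using k(1) by presburger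
    then have "even t" using power_mod_5_ne_4[OF 2] by blast
    then have "2 dvd m div 2" using t(2) by (metis dvd_trans)
    then have m4: "4 dvd m" using m(2) by (auto elim!: evenE)
    then have "m \<ge> 4" using m(1) by (simp add: dvd_imp_le)
    moreover have "m \<ge> 8" if "p = 2"
    proof (rule ccontr)
      assume "\<not> m \<ge> 8"
      then have "m = 4" using m4 \<open>m \<ge> 4\<close> by (auto elim!: dvdE)
      then have "t = 2" using t \<open>even t\<close> by (auto dest!: dvd_imp_le)
      then show False using k(2) \<open>p = 2\<close> \<open>m = 4\<close> by simp
    qed
    ultimately show ?thesis using 2 m4 by auto
  qed
qed

lemma small_semiprimitive_iff:
  fixes p m t k :: nat
  assumes m: "m > 0" "even m" and t: "t > 0" "t dvd m div 2"
    and k: "k > 2" "k dvd p ^ t + 1" "k \<noteq> p ^ (m div 2) + 1"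
  shows "k \<le> 5 \<longleftrightarrow>
           (k = 3 \<and> p = 2 \<and> m \<ge> 4) \<or>
           (k = 3 \<and> p \<noteq> 2 \<and> p mod 3 = 2 \<and> m \<ge> 2) \<or>
           (k = 4 \<and> p = 3 \<and> m \<ge> 4) \<or>
           (k = 4 \<and> p \<noteq> 3 \<and> p mod 4 = 3 \<and> m \<ge> 2) \<or>
           (k = 5 \<and> p = 2 \<and> m \<ge> 8 \<and> 4 dvd m) \<or>
           (k = 5 \<and> p \<noteq> 2 \<and> (p mod 5 = 2 \<or> p mod 5 = 3) \<and> m \<ge> 4 \<and> 4 dvd m) \<or>
           (k = 5 \<and> p mod 5 = 4 \<and> m \<ge> 2)"
proof
  assume "k \<le> 5"
  then consider "k = 3" | "k = 4" | "k = 5" using k(1) by linarith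
  then show "(k = 3 \<and> p = 2 \<and> m \<ge> 4) \<or>
           (k = 3 \<and> p \<noteq> 2 \<and> p mod 3 = 2 \<and> m \<ge> 2) \<or>
           (k = 4 \<and> p = 3 \<and> m \<ge> 4) \<or>
           (k = 4 \<and> p \<noteq> 3 \<and> p mod 4 = 3 \<and> m \<ge> 2) \<or>
           (k = 5 \<and> p = 2 \<and> m \<ge> 8 \<and> 4 dvd m) \<or>
           (k = 5 \<and> p \<noteq> 2 \<and> (p mod 5 = 2 \<or> p mod 5 = 3) \<and> m \<ge> 4 \<and> 4 dvd m) \<or>
           (k = 5 \<and> p mod 5 = 4 \<and> m \<ge> 2)"
    by cases (use semiprimitive_3_cases[OF m t] semiprimitive_4_cases[OF m t]
        semiprimitive_5_cases[OF m t] k in auto)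
qed auto

lemma power_half_ge_7:
  fixes p m :: nat
  assumes "prime p" and "(p = 2 \<and> m \<ge> 8) \<or> (p \<noteq> 2 \<and> m \<ge> 4) \<or> (p mod 5 = 4 \<and> m \<ge> 2)"
  shows "p ^ (m div 2) \<ge> 7"
proof -
  have p2: "p \<ge> 2" using assms(1) by (rule prime_ge_2_nat)
  from assms(2) show ?thesis
  proof (elim disjE conjE)
    assume "p = 2" "m \<ge> 8"
    then have "2 ^ 4 \<le> (2::nat) ^ (m div 2)" by (intro power_increasing) auto
    then show ?thesis using \<open>p = 2\<close> by simp
  next
    assume "p \<noteq> 2" "m \<ge> 4"
    then have "3 ^ 2 \<le> p ^ 2" using p2 by (intro power_mono) auto
    also have "p ^ 2 \<le> p ^ (m div 2)" using \<open>m \<ge> 4\<close> p2 by (intro power_increasing) auto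
    finally show ?thesis by simp
  next
    assume "p mod 5 = 4" "m \<ge> 2"
    moreover have "p \<noteq> 4" using prime_odd_nat[OF assms(1)] by auto
    ultimately have "p \<ge> 7" using p2 by presburger
    moreover have "p ^ 1 \<le> p ^ (m div 2)" using \<open>m \<ge> 2\<close> p2 by (intro power_increasing) auto
    ultimately show ?thesis by simp
  qed
qed

lemma le_two_sqrt_div_iff:
  fixes a k B :: real
  assumes "a \<ge> 0" "k > 0"
  shows "a \<le> 2 * sqrt (B / k) \<longleftrightarrow> (k * a)\<^sup>2 \<le> 4 * k * B"
proof -
  have "(k * a)\<^sup>2 \<le> 4 * k * B \<longleftrightarrow> a\<^sup>2 \<le> 4 * (B / k)"
    using assms(2) by (simp add: power_mult_distrib field_simps power2_eq_square)
  also have "\<dots> \<longleftrightarrow> a \<le> sqrt (4 * (B / k))"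
    using assms(1) real_le_rsqrt real_sqrt_le_iff[of "a\<^sup>2"] by fastforce
  also have "sqrt (4 * (B / k)) = 2 * sqrt (B / k)"
    unfolding real_sqrt_mult by simp
  finally show ?thesis ..
qed

lemma gpaley_margin:
  fixes s :: real and k :: nat
  assumes "s \<ge> 0"
    and "k = 2 \<and> s\<^sup>2 \<ge> 5 \<or> k = 3 \<and> s \<ge> 3 \<or> k = 4 \<and> s \<ge> 4 \<or> k = 5 \<and> s \<ge> 7"
  shows "(1 + (real k - 1) * s)\<^sup>2 \<le> 4 * k * (s\<^sup>2 - 1 - k)"
proof -
  have sq: "c * s \<le> s * s" if "c \<le> s" for c
    using that assms(1) by (rule mult_right_mono)
  from assms(2) consider "k = 2" "s \<ge> 2" "s * s \<ge> 5" | "k = 3" "s \<ge> 3" | "k = 4" "s \<ge> 4"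
    | "k = 5" "s \<ge> 7"
    using power2_le_imp_le[of 2 s] assms(1) by (auto simp: power2_eq_square)
  then show ?thesis
  proof cases
    case 1
    have "(1 + (real k - 1) * s)\<^sup>2 = s * s + 2 * s + 1" "4 * k * (s\<^sup>2 - 1 - k) = 8 * (s * s) - 24"
      using 1 by (simp_all add: power2_eq_square algebra_simps)
    then show ?thesis using 1 sq[of 2] by linarith
  next
    case 2
    have "(1 + (real k - 1) * s)\<^sup>2 = 4 * (s * s) + 4 * s + 1" "4 * k * (s\<^sup>2 - 1 - k) = 12 * (s * s) - 48"
      using 2 by (simp_all add: power2_eq_square algebra_simps)
    then show ?thesis using 2 sq[of 3] by linarith
  next
    case 3
    have "(1 + (real k - 1) * s)\<^sup>2 = 9 * (s * s) + 6 * s + 1" "4 * k * (s\<^sup>2 - 1 - k) = 16 * (s * s) - 80"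
      using 3 by (simp_all add: power2_eq_square algebra_simps)
    then show ?thesis using 3 sq[of 4] by linarith
  next
    case 4
    have "(1 + (real k - 1) * s)\<^sup>2 = 16 * (s * s) + 8 * s + 1" "4 * k * (s\<^sup>2 - 1 - k) = 20 * (s * s) - 120"
      using 4 by (simp_all add: power2_eq_square algebra_simps)
    then show ?thesis using 4 sq[of 7] by linarith
  qed
qed

lemma gpaley_bar_margin:
  fixes k M :: real
  assumes "k \<ge> 3" "M \<ge> 3"
  shows "((k - 1) * (1 + M)) ^ 2 \<le> 4 * k * ((k - 1) * (M ^ 2 - 1) - k)"
proof -
  have e: "4 * k * ((k - 1) * (M ^ 2 - 1) - k) - ((k - 1) * (1 + M)) ^ 2
     = (k - 1) * (M + 1) * (k * (3 * M - 5) + M + 1) - 4 * k ^ 2"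
    by (simp add: power2_eq_square algebra_simps)
  have a: "k - 1 \<ge> 0" "M + 1 \<ge> 4" using assms by auto
  have c: "k * (3 * M - 5) + M + 1 \<ge> 4 * k + 4"
  proof -
    have "k * (3 * M - 5) \<ge> k * 4" using assms by (intro mult_left_mono) auto
    then show ?thesis using assms by linarith
  qed
  have "(k - 1) * (M + 1) \<ge> (k - 1) * 4" using a by (intro mult_left_mono) auto
  then have "(k - 1) * (M + 1) * (k * (3 * M - 5) + M + 1) \<ge> (k - 1) * 4 * (4 * k + 4)"
    using c a assms by (intro mult_mono) auto
  moreover have "(k - 1) * 4 * (4 * k + 4) = 16 * k ^ 2 - 16" by (simp add: power2_eq_square algebra_simps)
  moreover have "k ^ 2 \<ge> 9" using power_mono[of 3 k 2] assms(1) by simp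
  ultimately show ?thesis using e by linarith
qed

lemma gpaley_margin_fails:
  fixes k M :: real
  assumes "k \<ge> 6" "M \<ge> 1"
  shows "((k - 1) * M - 1) ^ 2 > 4 * k * (M ^ 2 - 1 - k)"
proof -
  have c: "(k - 1) ^ 2 - 4 * k \<ge> 1"
  proof -
    have "(k - 1) ^ 2 - 4 * k - 1 = (k - 6) * k" by (simp add: power2_eq_square algebra_simps)
    moreover have "(k - 6) * k \<ge> 0" using assms(1) by simp
    ultimately show ?thesis by linarith
  qed
  have h: "((k - 1) ^ 2 - 4 * k) * M ^ 2 - M ^ 2 \<ge> 0"
  proof -
    have "((k - 1) ^ 2 - 4 * k) * M ^ 2 \<ge> 1 * M ^ 2" using c by (intro mult_right_mono) auto
    then show ?thesis by simp
  qed
  have e: "((k - 1) * M - 1) ^ 2 - 4 * k * (M ^ 2 - 1 - k)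
    = (((k - 1) ^ 2 - 4 * k) * M ^ 2 - M ^ 2) + (M - k + 1) ^ 2 + (3 * k ^ 2 + 6 * k)"
    by (simp add: power2_eq_square algebra_simps)
  have "k ^ 2 \<ge> 0" by simp
  then have "3 * k ^ 2 + 6 * k > 0" using assms(1) by linarith
  moreover have "(M - k + 1) ^ 2 \<ge> 0" by simp
  ultimately show ?thesis using e h by linarith
qed

section \<open>The subfields of a finite field\<close>

locale finite_field_primitive =
  fixes p m :: nat and g :: "'a::{finite,field}"
  assumes prime_p: "prime p" and m_pos: "m > 0"
    and card_q: "card (UNIV :: 'a set) = p ^ m"
    and g_nz: "g \<noteq> 0" and g_gen: "\<And>x. x \<noteq> 0 \<Longrightarrow> \<exists>i. x = g ^ i"
begin

abbreviation q :: nat where "q \<equiv> p ^ m"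

lemma p_ge_2: "p \<ge> 2" using prime_p prime_ge_2_nat by blast

lemma q_ge_2: "q \<ge> 2"
proof -
  have "p ^ 1 \<le> q" using m_pos p_ge_2 by (intro power_increasing) auto
  then show ?thesis using p_ge_2 by simp
qed

lemma power_q_minus_1: "x \<noteq> 0 \<Longrightarrow> x ^ (q - 1) = (1::'a)"
  using nonzero_power_card_minus_1[of x] card_q by simp

lemma gen_power_mod: "g ^ i = g ^ (i mod (q - 1))"
proof -
  have "g ^ i = g ^ ((q - 1) * (i div (q - 1)) + i mod (q - 1))" by simp
  also have "\<dots> = g ^ (i mod (q - 1))"
    by (simp only: power_add power_mult power_q_minus_1[OF g_nz]) simp
  finally show ?thesis .
qed

lemma inj_on_gen_power: "inj_on (\<lambda>i. g ^ i) {..<q - 1}"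
proof -
  have img: "(\<lambda>i. g ^ i) ` {..<q - 1} = UNIV - {0}"
  proof
    show "(\<lambda>i. g ^ i) ` {..<q - 1} \<subseteq> UNIV - {0}" using g_nz by auto
    show "UNIV - {0} \<subseteq> (\<lambda>i. g ^ i) ` {..<q - 1}"
    proof
      fix x :: 'a assume "x \<in> UNIV - {0}"
      then obtain i where "x = g ^ i" using g_gen by auto
      then have "x = g ^ (i mod (q - 1))" using gen_power_mod by simp
      moreover have "i mod (q - 1) < q - 1" using q_ge_2 by simp
      ultimately show "x \<in> (\<lambda>i. g ^ i) ` {..<q - 1}" by blast
    qed
  qed
  have "card (UNIV - {0::'a}) = q - 1" using card_q by simp
  then show ?thesis using img by (intro eq_card_imp_inj_on) auto
qed

lemma gen_power_eq_iff: "g ^ a = g ^ b \<longleftrightarrow> a mod (q - 1) = b mod (q - 1)"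
proof
  assume "g ^ a = g ^ b"
  then have "g ^ (a mod (q - 1)) = g ^ (b mod (q - 1))" using gen_power_mod by metis
  moreover have "a mod (q - 1) < q - 1" "b mod (q - 1) < q - 1" using q_ge_2 by auto
  ultimately show "a mod (q - 1) = b mod (q - 1)" using inj_on_gen_power by (auto dest: inj_onD)
next
  assume "a mod (q - 1) = b mod (q - 1)"
  then show "g ^ a = g ^ b" using gen_power_mod by metis
qed

lemma CHAR_eq_p: "CHAR('a) = p"
proof -
  have fin: "finite (UNIV :: 'a set)" by simp
  have "CHAR('a) > 0" using finite_imp_CHAR_pos[OF fin] .
  then have pc: "prime CHAR('a)" using prime_CHAR_semidom by blast
  have "CHAR('a) dvd q" using CHAR_dvd_CARD[where 'a='a] card_q by simp
  then have "CHAR('a) dvd p" using pc prime_dvd_power by blast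
  then show ?thesis using pc prime_p by (simp add: primes_dvd_imp_eq)
qed

lemma frobenius_add: "(x + y :: 'a) ^ (p ^ d) = x ^ (p ^ d) + y ^ (p ^ d)"
  using freshmans_dream'[of "p ^ d" d x y] CHAR_eq_p prime_p by simp

lemma frobenius_sum: "(\<Sum>i\<in>A. f i :: 'a) ^ (p ^ d) = (\<Sum>i\<in>A. f i ^ (p ^ d))"
  using p_ge_2 by (induction A rule: infinite_finite_induct) (auto simp: frobenius_add)

lemma frobenius_uminus: "(- x :: 'a) ^ (p ^ d) = - (x ^ (p ^ d))"
proof -
  have "(x + - x) ^ (p ^ d) = x ^ (p ^ d) + (- x) ^ (p ^ d)" by (rule frobenius_add)
  moreover have "(0::'a) ^ (p ^ d) = 0" using p_ge_2 by simp
  ultimately show ?thesis by (simp add: eq_neg_iff_add_eq_0 add.commute)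
qed

lemma frobenius_diff: "(x - y :: 'a) ^ (p ^ d) = x ^ (p ^ d) - y ^ (p ^ d)"
  using frobenius_add[of x "-y" d] frobenius_uminus[of y d] by simp

lemma frobenius_of_nat: "(of_nat j :: 'a) ^ p = of_nat j"
proof (induction j)
  case 0 then show ?case using p_ge_2 by simp
next
  case (Suc j)
  have "(of_nat j + 1 :: 'a) ^ (p ^ 1) = of_nat j ^ (p ^ 1) + 1 ^ (p ^ 1)" by (rule frobenius_add)
  then show ?case using Suc by (simp add: add.commute)
qed

definition GF :: "nat \<Rightarrow> 'a set" where "GF d = {x. x ^ (p ^ d) = x}"

lemma zero_GF: "0 \<in> GF d" and one_GF: "1 \<in> GF d" using p_ge_2 by (auto simp: GF_def)

lemma GF_add: "x \<in> GF d \<Longrightarrow> y \<in> GF d \<Longrightarrow> x + y \<in> GF d" by (simp add: GF_def frobenius_add)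

lemma GF_mult: "x \<in> GF d \<Longrightarrow> y \<in> GF d \<Longrightarrow> x * y \<in> GF d" by (simp add: GF_def power_mult_distrib)

lemma GF_uminus: "x \<in> GF d \<Longrightarrow> - x \<in> GF d" by (simp add: GF_def frobenius_uminus)

lemma GF_diff: "x \<in> GF d \<Longrightarrow> y \<in> GF d \<Longrightarrow> x - y \<in> GF d" by (simp add: GF_def frobenius_diff)

lemma GF_inverse: "x \<in> GF d \<Longrightarrow> inverse x \<in> GF d" by (simp add: GF_def power_inverse)

lemma GF_divide: "x \<in> GF d \<Longrightarrow> y \<in> GF d \<Longrightarrow> x / y \<in> GF d"
  by (simp add: divide_inverse GF_mult GF_inverse)

lemma GF_m_eq_UNIV: "GF m = UNIV"
proof -
  have "x ^ (q) = x" for x :: 'a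
  proof (cases "x = 0")
    case False
    have "x ^ (q) = x * x ^ (q - 1)"
      using q_ge_2 by (metis Suc_diff_1 less_le_trans pos2 power_Suc)
    then show ?thesis using power_q_minus_1[OF False] by simp
  qed (use m_pos p_ge_2 in simp)
  then show ?thesis by (auto simp: GF_def)
qed

lemma power_minus_1_dvd_q_minus_1: "d dvd m \<Longrightarrow> p ^ d - 1 dvd q - 1"
proof -
  assume "d dvd m" then obtain r where "m = d * r" by blast
  then show ?thesis using nat_power_minus_1_dvd[of "p ^ d" r] by (simp add: power_mult)
qed

lemma power_ge_2: "d > 0 \<Longrightarrow> p ^ d \<ge> 2"
proof -
  assume "d > 0"
  then have "p ^ 1 \<le> p ^ d" using p_ge_2 by (intro power_increasing) auto
  then show ?thesis using p_ge_2 by simp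
qed

lemma GF_nonzero_iff:
  assumes "d dvd m" "d > 0" "x \<noteq> 0"
  shows "x \<in> GF d \<longleftrightarrow> (\<exists>j. x = g ^ (((q - 1) div (p ^ d - 1)) * j))"
proof -
  define w where "w = (q - 1) div (p ^ d - 1)"
  have nw: "q - 1 = w * (p ^ d - 1)" using power_minus_1_dvd_q_minus_1[OF assms(1)] by (simp add: w_def)
  have L1: "p ^ d - 1 > 0" using power_ge_2[OF assms(2)] by simp
  obtain i where x: "x = g ^ i" using g_gen assms(3) by blast
  have ge: "i \<le> i * p ^ d" using p_ge_2 by simp
  have "x \<in> GF d \<longleftrightarrow> g ^ (i * p ^ d) = g ^ i" by (simp add: GF_def x power_mult)
  also have "\<dots> \<longleftrightarrow> (q - 1) dvd (i * p ^ d - i)"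
    using gen_power_eq_iff mod_eq_dvd_iff_nat[OF ge] by metis
  also have "i * p ^ d - i = i * (p ^ d - 1)" by (simp add: diff_mult_distrib2)
  also have "(q - 1) dvd i * (p ^ d - 1) \<longleftrightarrow> w dvd i"
    unfolding nw using L1 by (simp add: dvd_times_right_cancel_iff)
  also have "\<dots> \<longleftrightarrow> (\<exists>j. x = g ^ (w * j))"
  proof
    assume "w dvd i" then show "\<exists>j. x = g ^ (w * j)" using x by (auto simp: dvd_def)
  next
    assume "\<exists>j. x = g ^ (w * j)"
    then obtain j where "x = g ^ (w * j)" by blast
    then have "i mod (q - 1) = (w * j) mod (q - 1)" using x gen_power_eq_iff by simp
    then have "(i mod (q - 1)) mod w = ((w * j) mod (q - 1)) mod w" by simp
    moreover have "w dvd q - 1" unfolding nw by simp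
    ultimately have "i mod w = (w * j) mod w" by (simp add: mod_mod_cancel)
    then show "w dvd i" by (simp add: dvd_eq_mod_eq_0)
  qed
  finally show ?thesis by (simp add: w_def)
qed

lemma GF_nonzero_eq_image:
  assumes "d dvd m" "d > 0"
  shows "GF d - {0} = (\<lambda>j. g ^ (((q - 1) div (p ^ d - 1)) * j)) ` {..<p ^ d - 1}"
    and "inj_on (\<lambda>j. g ^ (((q - 1) div (p ^ d - 1)) * j)) {..<p ^ d - 1}"
proof -
  define w where "w = (q - 1) div (p ^ d - 1)"
  have nw: "q - 1 = w * (p ^ d - 1)" using power_minus_1_dvd_q_minus_1[OF assms(1)] by (simp add: w_def)
  have L1: "p ^ d - 1 > 0" using power_ge_2[OF assms(2)] by simp
  have w0: "w > 0" using nw q_ge_2 by (cases w) auto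
  show "GF d - {0} = (\<lambda>j. g ^ (w * j)) ` {..<p ^ d - 1}" unfolding w_def
  proof
    show "GF d - {0} \<subseteq> (\<lambda>j. g ^ (((q - 1) div (p ^ d - 1)) * j)) ` {..<p ^ d - 1}"
    proof
      fix x assume xa: "x \<in> GF d - {0}"
      then obtain j where x: "x = g ^ (w * j)" using GF_nonzero_iff[OF assms] w_def by blast
      have "g ^ (w * j) = g ^ (w * (j mod (p ^ d - 1)))"
        unfolding gen_power_eq_iff nw mod_mult_mult1 by simp
      moreover have "j mod (p ^ d - 1) < p ^ d - 1" using L1 by simp
      ultimately show "x \<in> (\<lambda>j. g ^ (((q - 1) div (p ^ d - 1)) * j)) ` {..<p ^ d - 1}"
        using x w_def by blast
    qed
    show "(\<lambda>j. g ^ (((q - 1) div (p ^ d - 1)) * j)) ` {..<p ^ d - 1} \<subseteq> GF d - {0}"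
      using GF_nonzero_iff[OF assms] g_nz by (auto simp: w_def)
  qed
  show "inj_on (\<lambda>j. g ^ (((q - 1) div (p ^ d - 1)) * j)) {..<p ^ d - 1}"
  proof (rule inj_onI)
    fix a b assume ab: "a \<in> {..<p ^ d - 1}" "b \<in> {..<p ^ d - 1}"
      and e: "g ^ (((q - 1) div (p ^ d - 1)) * a) = g ^ (((q - 1) div (p ^ d - 1)) * b)"
    have "w * a < q - 1" "w * b < q - 1" unfolding nw using ab w0 by auto
    then have "w * a = w * b" using e gen_power_eq_iff unfolding w_def by simp
    then show "a = b" using w0 by simp
  qed
qed

lemma card_GF_nonzero: "d dvd m \<Longrightarrow> d > 0 \<Longrightarrow> card (GF d - {0}) = p ^ d - 1"
  using GF_nonzero_eq_image[of d] card_image by (simp add: card_image)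

lemma card_GF: "d dvd m \<Longrightarrow> d > 0 \<Longrightarrow> card (GF d) = p ^ d"
proof -
  assume a: "d dvd m" "d > 0"
  have "card (GF d - {0}) = card (GF d) - 1"
    using zero_GF by (simp add: card_Diff_singleton)
  moreover have "card (GF d) > 0" using zero_GF by (auto simp: card_gt_0_iff)
  ultimately show ?thesis using card_GF_nonzero[OF a] power_ge_2[OF a(2)] by simp
qed

lemma GF_mono: "d dvd e \<Longrightarrow> GF d \<subseteq> GF e"
proof
  fix x assume "d dvd e" "x \<in> GF d"
  then obtain r where e: "e = d * r" by blast
  have "x ^ (p ^ (d * r)) = x"
  proof (induction r)
    case 0 then show ?case by simp
  next
    case (Suc r)
    have "x ^ (p ^ (d * Suc r)) = (x ^ (p ^ d)) ^ (p ^ (d * r))"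
      by (simp add: power_add power_mult[symmetric] mult.commute)
    then show ?case using \<open>x \<in> GF d\<close> Suc by (simp add: GF_def)
  qed
  then show "x \<in> GF e" by (simp add: GF_def e)
qed

end

section \<open>Additive characters\<close>

context finite_field_primitive
begin

lemma p_pos: "p > 0" using p_ge_2 by simp

lemma of_nat_eq_iff_mod: "(of_nat a :: 'a) = of_nat b \<longleftrightarrow> a mod p = b mod p"
proof -
  have "(of_nat a :: 'a) = of_nat b \<longleftrightarrow> a mod p = b mod p" if ab: "a < b" for a b
  proof -
    have le: "a \<le> b" using ab by simp
    show ?thesis using of_nat_eq_iff_char_dvd[OF ab, where 'a='a] CHAR_eq_p
      mod_eq_dvd_iff_nat[OF le] by metis
  qed
  then show ?thesis by (metis linorder_neqE_nat)
qed

lemma GF1_eq_of_nat: "GF 1 = of_nat ` {..<p}"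
proof -
  have sub: "of_nat ` {..<p} \<subseteq> GF 1" by (auto simp: GF_def frobenius_of_nat)
  have inj: "inj_on (of_nat :: nat \<Rightarrow> 'a) {..<p}"
    by (rule inj_onI) (simp add: of_nat_eq_iff_mod)
  have "card (of_nat ` {..<p} :: 'a set) = p" using card_image[OF inj] by simp
  moreover have "card (GF 1) = p" using card_GF[of 1] by simp
  ultimately show ?thesis using sub by (intro card_subset_eq[symmetric]) auto
qed

definition nat_of_GF1 :: "'a \<Rightarrow> nat" where "nat_of_GF1 y = (SOME j. j < p \<and> y = of_nat j)"

lemma nat_of_GF1: "y \<in> GF 1 \<Longrightarrow> nat_of_GF1 y < p \<and> of_nat (nat_of_GF1 y) = y"
proof -
  assume "y \<in> GF 1"
  then have "\<exists>j. j < p \<and> y = of_nat j" using GF1_eq_of_nat by auto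
  then show ?thesis unfolding nat_of_GF1_def by (metis (mono_tags, lifting) someI_ex)
qed

lemma nat_of_GF1_zero: "nat_of_GF1 0 = 0"
proof -
  have "(0::'a) \<in> GF 1" by (rule zero_GF)
  from nat_of_GF1[OF this] have "nat_of_GF1 0 < p" "of_nat (nat_of_GF1 0) = (of_nat 0 :: 'a)" by auto
  then show ?thesis using of_nat_eq_iff_mod[of "nat_of_GF1 0" 0] by simp
qed

definition trace :: "nat \<Rightarrow> 'a \<Rightarrow> 'a" where "trace d x = (\<Sum>i<d. x ^ (p ^ i))"

lemma trace_add: "trace d (x + y) = trace d x + trace d y"
  by (simp add: trace_def frobenius_add sum.distrib)

lemma trace_zero: "trace d 0 = 0" unfolding trace_def using p_pos by (intro sum.neutral) simp

lemma trace_in_GF1: "x \<in> GF d \<Longrightarrow> trace d x \<in> GF 1"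
proof -
  assume x: "x \<in> GF d"
  have A: "(\<Sum>i<Suc d. x ^ (p ^ i)) = x + (\<Sum>i<d. x ^ (p ^ Suc i))"
    using sum.lessThan_Suc_shift[of "\<lambda>i. x ^ (p ^ i)" d] by simp
  have B: "(\<Sum>i<Suc d. x ^ (p ^ i)) = trace d x + x" using x by (simp add: trace_def GF_def)
  have "(trace d x) ^ (p ^ 1) = (\<Sum>i<d. (x ^ (p ^ i)) ^ (p ^ 1))"
    unfolding trace_def by (rule frobenius_sum)
  also have "\<dots> = (\<Sum>i<d. x ^ (p ^ Suc i))"
    by (simp add: power_mult[symmetric] mult.commute)
  also have "\<dots> = trace d x" using A B by (simp add: add.commute)
  finally show ?thesis by (simp add: GF_def)
qed

lemma trace_double:
  assumes "x \<in> GF (2 * d)"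
  shows "trace (2 * d) x = trace d (x + x ^ (p ^ d))"
proof -
  have "trace (2 * d) x = (\<Sum>i<d. x ^ (p ^ i)) + (\<Sum>i\<in>{d..<d + d}. x ^ (p ^ i))"
    unfolding trace_def by (simp add: mult_2 lessThan_atLeast0 sum.atLeastLessThan_concat)
  also have "(\<Sum>i\<in>{d..<d + d}. x ^ (p ^ i)) = (\<Sum>i<d. x ^ (p ^ (i + d)))"
    using sum.shift_bounds_nat_ivl[of "\<lambda>i. x ^ (p ^ i)" 0 d d] by (simp add: lessThan_atLeast0)
  also have "\<dots> = (\<Sum>i<d. (x ^ (p ^ d)) ^ (p ^ i))"
    by (simp add: power_mult[symmetric] power_add mult.commute)
  finally show ?thesis by (simp add: trace_def frobenius_add sum.distrib)
qed

lemma exists_trace_nonzero: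
  assumes "d dvd m" "d > 0"
  shows "\<exists>x\<in>GF d. trace d x \<noteq> 0"
proof (rule ccontr)
  assume "\<not> ?thesis"
  then have all: "GF d \<subseteq> {x. trace d x = 0}" by auto
  define P :: "'a poly" where "P = (\<Sum>i<d. monom 1 (p ^ i))"
  have ev: "poly P x = trace d x" for x by (simp add: P_def trace_def poly_sum poly_monom)
  have cf: "coeff P j = (\<Sum>i<d. if p ^ i = j then 1 else 0)" for j
    by (simp add: P_def coeff_sum coeff_monom)
  have mono: "i < d \<Longrightarrow> p ^ i \<le> p ^ (d - 1)" for i using p_ge_2 by (intro power_increasing) auto
  have "coeff P (p ^ (d - 1)) = (\<Sum>i<d. if i = d - 1 then 1 else 0)"
    unfolding cf using p_ge_2 by (intro sum.cong) (auto simp: power_inject_exp)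
  also have "\<dots> = 1" using assms(2) by simp
  finally have P0: "P \<noteq> 0" by auto
  have "degree P \<le> p ^ (d - 1)"
  proof (rule degree_le)
    show "\<forall>i>p ^ (d - 1). coeff P i = 0"
      using mono by (auto simp: cf intro!: sum.neutral) (metis leD)
  qed
  have "card (GF d) \<le> card {x. poly P x = 0}"
    using all ev by (intro card_mono) (auto intro: poly_roots_finite[OF P0])
  also have "\<dots> \<le> degree P" by (rule card_poly_roots_bound[OF P0])
  also have "\<dots> \<le> p ^ (d - 1)" by fact
  also have "\<dots> < p ^ d" using assms(2) p_ge_2 by (intro power_strict_increasing) auto
  finally show False using card_GF[OF assms] by simp
qed

definition add_char :: "nat \<Rightarrow> 'a \<Rightarrow> complex" where "add_char d x = root_unity p ^ nat_of_GF1 (trace d x)"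

lemma add_char_zero [simp]: "add_char d 0 = 1" by (simp add: add_char_def trace_zero nat_of_GF1_zero)

lemma norm_add_char [simp]: "norm (add_char d x) = 1" by (simp add: add_char_def)

lemma add_char_add:
  assumes "x \<in> GF d" "y \<in> GF d"
  shows "add_char d (x + y) = add_char d x * add_char d y"
proof -
  define a where "a = nat_of_GF1 (trace d x)"
  define b where "b = nat_of_GF1 (trace d y)"
  define c where "c = nat_of_GF1 (trace d (x + y))"
  have tx: "trace d x \<in> GF 1" "trace d y \<in> GF 1" using trace_in_GF1 assms by auto
  have txy: "trace d (x + y) \<in> GF 1" using trace_in_GF1 GF_add assms by blast
  have "(of_nat c :: 'a) = trace d x + trace d y" using nat_of_GF1[OF txy] by (simp add: c_def trace_add)
  also have "\<dots> = of_nat a + of_nat b" using nat_of_GF1[OF tx(1)] nat_of_GF1[OF tx(2)] by (simp add: a_def b_def)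
  finally have "(of_nat c :: 'a) = of_nat (a + b)" by simp
  then have "c mod p = (a + b) mod p" using of_nat_eq_iff_mod by blast
  then have "root_unity p ^ c = root_unity p ^ (a + b)" using root_unity_power_eq_iff[OF p_pos] by blast
  then show ?thesis by (simp add: add_char_def a_def b_def c_def power_add)
qed

lemma add_char_uminus:
  assumes "x \<in> GF d"
  shows "add_char d (- x) = cnj (add_char d x)"
proof -
  have "add_char d x * add_char d (- x) = 1" using add_char_add[OF assms GF_uminus[OF assms]] by simp
  moreover have "add_char d x * cnj (add_char d x) = 1"
    using complex_norm_square[of "add_char d x"] by simp
  moreover have "add_char d x \<noteq> 0" by (metis norm_add_char norm_zero zero_neq_one)
  ultimately show ?thesis by (metis mult_left_cancel)
qed

lemma exists_add_char_ne_1: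
  assumes "d dvd m" "d > 0"
  shows "\<exists>x\<in>GF d. add_char d x \<noteq> 1"
proof -
  obtain x where x: "x \<in> GF d" "trace d x \<noteq> 0" using exists_trace_nonzero[OF assms] by blast
  have t: "trace d x \<in> GF 1" using trace_in_GF1[OF x(1)] .
  have "nat_of_GF1 (trace d x) \<noteq> 0" by (metis of_nat_0 nat_of_GF1[OF t] x(2))
  moreover have "nat_of_GF1 (trace d x) < p" using nat_of_GF1[OF t] by simp
  ultimately have "\<not> p dvd nat_of_GF1 (trace d x)" by (auto dest: dvd_imp_le)
  then have "add_char d x \<noteq> 1" using root_unity_power_eq_1_iff[OF p_pos] by (simp add: add_char_def)
  then show ?thesis using x by blast
qed

lemma sum_add_char:
  assumes "d dvd m" "d > 0"
  shows "(\<Sum>x\<in>GF d. add_char d x) = 0"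
proof -
  obtain x0 where x0: "x0 \<in> GF d" "add_char d x0 \<noteq> 1" using exists_add_char_ne_1[OF assms] by blast
  have "(\<Sum>x\<in>GF d. add_char d x) = (\<Sum>x\<in>GF d. add_char d (x + x0))"
    by (rule sum.reindex_bij_witness[of _ "\<lambda>x. x + x0" "\<lambda>x. x - x0"])
      (auto intro: GF_add GF_diff x0)
  also have "\<dots> = add_char d x0 * (\<Sum>x\<in>GF d. add_char d x)"
    by (simp add: sum_distrib_left add_char_add x0 mult.commute)
  finally show ?thesis using x0(2) by (metis mult_cancel_right1)
qed

lemma sum_add_char_scaled:
  assumes "d dvd m" "d > 0" "t \<in> GF d"
  shows "(\<Sum>c\<in>GF d. add_char d (c * t)) = (if t = 0 then of_nat (p ^ d) else 0)"
proof (cases "t = 0")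
  case True then show ?thesis using card_GF[OF assms(1,2)] by simp
next
  case False
  have "(\<Sum>c\<in>GF d. add_char d (c * t)) = (\<Sum>x\<in>GF d. add_char d x)"
    by (rule sum.reindex_bij_witness[of _ "\<lambda>x. x / t" "\<lambda>c. c * t"])
      (use False assms(3) in \<open>auto intro: GF_mult GF_divide\<close>)
  then show ?thesis using sum_add_char[OF assms(1,2)] False by simp
qed

lemma sum_add_char_scaled_nonzero:
  assumes "d dvd m" "d > 0" "t \<in> GF d"
  shows "(\<Sum>c\<in>GF d - {0}. add_char d (c * t)) = (if t = 0 then of_nat (p ^ d) - 1 else - 1)"
proof -
  have "(\<Sum>c\<in>GF d. add_char d (c * t)) = add_char d (0 * t) + (\<Sum>c\<in>GF d - {0}. add_char d (c * t))"
    using zero_GF by (subst sum.remove[of _ 0]) auto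
  moreover have "add_char d (0 * t) = 1" by simp
  ultimately have "1 + (\<Sum>c\<in>GF d - {0}. add_char d (c * t)) = (if t = 0 then of_nat (p ^ d) else 0)"
    using sum_add_char_scaled[OF assms] by simp
  then show ?thesis by (auto simp: algebra_simps add_eq_0_iff split: if_splits)
qed

lemma sum_add_char_UNIV: "(\<Sum>b\<in>UNIV. add_char m (b * t)) = (if t = 0 then of_nat q else 0)"
  using sum_add_char_scaled[of m t] GF_m_eq_UNIV m_pos by simp

lemma add_char_m_add: "add_char m (x + y) = add_char m x * add_char m y"
  using add_char_add[of x m y] GF_m_eq_UNIV by simp

lemma sum_add_char_nonzero: "(\<Sum>c\<in>UNIV - {0}. add_char m (c * t)) = (if t = 0 then of_nat q - 1 else - 1)"
  using sum_add_char_scaled_nonzero[of m t] GF_m_eq_UNIV m_pos by simp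

end

section \<open>Multiplicative characters and Gauss sums\<close>

context finite_field_primitive
begin

lemma q_minus_1_pos: "q - 1 > 0" using q_ge_2 by linarith

definition dlog :: "'a \<Rightarrow> nat" where "dlog x = (SOME i. x = g ^ i)"

lemma gen_power_dlog: "x \<noteq> 0 \<Longrightarrow> g ^ dlog x = x"
  unfolding dlog_def by (metis (mono_tags) g_gen someI_ex)

lemma dlog_gen_power: "dlog (g ^ i) mod (q - 1) = i mod (q - 1)"
  using gen_power_dlog[of "g ^ i"] g_nz gen_power_eq_iff by simp

definition mult_char :: "'a \<Rightarrow> complex" where "mult_char x = root_unity (q - 1) ^ dlog x"

lemma mult_char_gen_power: "mult_char (g ^ i) = root_unity (q - 1) ^ i"
  unfolding mult_char_def using root_unity_power_eq_iff[OF q_minus_1_pos] dlog_gen_power by blast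

lemma mult_char_mult:
  assumes "x \<noteq> 0" "y \<noteq> 0"
  shows "mult_char (x * y) = mult_char x * mult_char y"
proof -
  obtain a b where "x = g ^ a" "y = g ^ b" using g_gen assms by blast
  then show ?thesis by (simp add: mult_char_gen_power flip: power_add)
qed

lemma mult_char_1 [simp]: "mult_char 1 = 1" using mult_char_gen_power[of 0] by simp

lemma norm_mult_char [simp]: "norm (mult_char x) = 1" by (simp add: mult_char_def)

lemma mult_char_power: "x \<noteq> 0 \<Longrightarrow> mult_char (x ^ e) = mult_char x ^ e"
  by (induction e) (auto simp: mult_char_mult)

lemma sum_GF_nonzero_gen_power:
  assumes "d dvd m" "d > 0"
  shows "(\<Sum>x\<in>GF d - {0}. h x) = (\<Sum>e<p ^ d - 1. h (g ^ (((q - 1) div (p ^ d - 1)) * e)))"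
  using GF_nonzero_eq_image[OF assms] by (simp add: sum.reindex)

lemma sum_mult_char_power_GF:
  assumes d: "d dvd m" "d > 0" and e: "\<not> (p ^ d - 1) dvd e"
  shows "(\<Sum>x\<in>GF d - {0}. mult_char x ^ e) = 0"
proof -
  define w where "w = (q - 1) div (p ^ d - 1)"
  have nw: "q - 1 = w * (p ^ d - 1)" using power_minus_1_dvd_q_minus_1[OF d(1)] by (simp add: w_def)
  have w0: "w > 0" using nw q_minus_1_pos by (cases w) auto
  define z where "z = root_unity (q - 1) ^ (w * e)"
  have "(\<Sum>x\<in>GF d - {0}. mult_char x ^ e) = (\<Sum>i<p ^ d - 1. mult_char (g ^ (w * i)) ^ e)"
    using sum_GF_nonzero_gen_power[OF d] by (simp add: w_def)
  also have "\<dots> = (\<Sum>i<p ^ d - 1. z ^ i)"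
    by (intro sum.cong refl) (simp only: mult_char_gen_power z_def power_mult[symmetric] mult_ac)
  also have "\<dots> = 0"
  proof (rule sum_powers_root_of_unity)
    have "(q - 1) dvd w * e * (p ^ d - 1)" using nw by simp
    then show "z ^ (p ^ d - 1) = 1" unfolding z_def power_mult[symmetric]
      using root_unity_power_eq_1_iff[OF q_minus_1_pos] by blast
    have "\<not> (q - 1) dvd w * e"
    proof
      assume "(q - 1) dvd w * e"
      then have "w * (p ^ d - 1) dvd w * e" using nw by simp
      then show False using e w0 by simp
    qed
    then show "z \<noteq> 1" unfolding z_def using root_unity_power_eq_1_iff[OF q_minus_1_pos] by simp
  qed
  finally show ?thesis .
qed

definition gauss_sum :: "('a \<Rightarrow> complex) \<Rightarrow> complex" where
  "gauss_sum f = (\<Sum>x\<in>UNIV - {0}. f x * add_char m x)"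

lemma gauss_sum_norm_sq:
  assumes mult: "\<And>x y. x \<noteq> 0 \<Longrightarrow> y \<noteq> 0 \<Longrightarrow> f (x * y) = f x * f y"
    and nrm: "\<And>x. x \<noteq> 0 \<Longrightarrow> norm (f x) = 1"
    and nontriv: "(\<Sum>x\<in>UNIV - {0}. f x) = 0"
  shows "gauss_sum f * cnj (gauss_sum f) = of_nat q"
proof -
  define U where "U = (UNIV - {0::'a})"
  note f1 = multiplicative_unitary(1)[OF mult nrm]
  have cG: "cnj (gauss_sum f) = (\<Sum>y\<in>U. cnj (f y) * cnj (add_char m y))" by (simp add: gauss_sum_def U_def cnj_sum)
  have "gauss_sum f * cnj (gauss_sum f) = (\<Sum>x\<in>U. \<Sum>y\<in>U. (f x * add_char m x) * (cnj (f y) * cnj (add_char m y)))"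
    unfolding cG by (simp add: gauss_sum_def U_def sum_product)
  also have "\<dots> = (\<Sum>y\<in>U. \<Sum>x\<in>U. (f x * add_char m x) * (cnj (f y) * cnj (add_char m y)))"
    by (rule sum.swap)
  also have "\<dots> = (\<Sum>y\<in>U. \<Sum>x\<in>U. f x * cnj (f y) * (add_char m x * cnj (add_char m y)))"
    by (intro sum.cong refl) (simp add: mult_ac)
  also have "\<dots> = (\<Sum>y\<in>U. \<Sum>x\<in>U. f (x / y) * add_char m (x - y))"
  proof (intro sum.cong refl)
    fix x y assume "x \<in> U" "y \<in> U"
    then have xy: "x \<noteq> 0" "y \<noteq> 0" by (auto simp: U_def)
    have "f x * cnj (f y) = f (x / y)" using multiplicative_unitary(2)[OF mult nrm xy] .
    moreover have "add_char m x * cnj (add_char m y) = add_char m (x - y)"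
      using add_char_add[of x m "-y"] add_char_uminus[of y m] GF_m_eq_UNIV by simp
    ultimately show "f x * cnj (f y) * (add_char m x * cnj (add_char m y)) = f (x / y) * add_char m (x - y)"
      by simp
  qed
  also have "\<dots> = (\<Sum>y\<in>U. \<Sum>z\<in>U. f z * add_char m ((z - 1) * y))"
  proof (rule sum.cong[OF refl])
    fix y assume "y \<in> U"
    then have y: "y \<noteq> 0" by (auto simp: U_def)
    show "(\<Sum>x\<in>U. f (x / y) * add_char m (x - y)) = (\<Sum>z\<in>U. f z * add_char m ((z - 1) * y))"
      by (rule sum.reindex_bij_witness[of _ "\<lambda>z. z * y" "\<lambda>x. x / y"])
        (use y in \<open>auto simp: U_def algebra_simps\<close>)
  qed
  also have "\<dots> = (\<Sum>z\<in>U. f z * (\<Sum>y\<in>U. add_char m (y * (z - 1))))"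
    by (subst sum.swap) (simp add: sum_distrib_left mult.commute)
  also have "\<dots> = (\<Sum>z\<in>U. f z * (if z = 1 then of_nat q - 1 else - 1))"
    unfolding U_def using sum_add_char_nonzero by simp
  also have "\<dots> = (\<Sum>z\<in>U. f z * (if z = 1 then of_nat q else 0) - f z)"
    by (intro sum.cong refl) (auto simp: algebra_simps)
  also have "\<dots> = (\<Sum>z\<in>U. f z * (if z = 1 then of_nat q else 0)) - (\<Sum>z\<in>U. f z)"
    by (simp add: sum_subtractf)
  also have "(\<Sum>z\<in>U. f z * (if z = 1 then of_nat q else 0)) = (\<Sum>z\<in>U. if z = 1 then f 1 * of_nat q else 0)"
    by (intro sum.cong refl) auto
  also have "\<dots> = f 1 * of_nat q" by (simp add: sum.delta U_def)
  also have "f 1 * of_nat q - (\<Sum>z\<in>U. f z) = of_nat q"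
    using nontriv f1 by (simp add: U_def)
  finally show ?thesis .
qed

end

section \<open>Gauss periods\<close>

context finite_field_primitive
begin

lemma kth_powers_iff_dlog:
  assumes k: "k > 0" "k dvd q - 1"
  shows "y \<in> kth_powers k \<longleftrightarrow> y \<noteq> 0 \<and> k dvd dlog y"
proof
  assume "y \<in> kth_powers k"
  then obtain x where x: "x \<noteq> 0" "y = x ^ k" by (auto simp: kth_powers_def)
  obtain c where c: "x = g ^ c" using g_gen x(1) by blast
  have y0: "y \<noteq> 0" using x by simp
  have "y = g ^ (c * k)" using x c by (simp add: power_mult)
  then have "dlog y mod (q - 1) = (c * k) mod (q - 1)" using dlog_gen_power by simp
  then have "dlog y mod (q - 1) mod k = (c * k) mod (q - 1) mod k" by simp
  then have "dlog y mod k = (c * k) mod k" using k(2) by (simp add: mod_mod_cancel)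
  then show "y \<noteq> 0 \<and> k dvd dlog y" using y0 by (simp add: dvd_eq_mod_eq_0)
next
  assume "y \<noteq> 0 \<and> k dvd dlog y"
  then obtain e where e: "y \<noteq> 0" "dlog y = k * e" by blast
  have "y = (g ^ e) ^ k" using gen_power_dlog[OF e(1)] e(2) by (simp add: power_mult mult.commute)
  moreover have "g ^ e \<noteq> 0" using g_nz by simp
  ultimately show "y \<in> kth_powers k" by (auto simp: kth_powers_def)
qed

lemma kth_powers_eq_image:
  assumes k: "k > 0" "k dvd q - 1"
  shows "kth_powers k = (\<lambda>e. g ^ (k * e)) ` {..<(q - 1) div k}"
    and "inj_on (\<lambda>e. g ^ (k * e)) {..<(q - 1) div k}"
proof -
  define w where "w = (q - 1) div k"
  have nw: "q - 1 = k * w" using k by (simp add: w_def)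
  show "kth_powers k = (\<lambda>e. g ^ (k * e)) ` {..<(q - 1) div k}"
  proof
    show "kth_powers k \<subseteq> (\<lambda>e. g ^ (k * e)) ` {..<(q - 1) div k}"
    proof
      fix y :: 'a assume "y \<in> kth_powers k"
      then have y: "y \<noteq> 0" "k dvd dlog y" using kth_powers_iff_dlog[OF k] by auto
      then obtain e where e: "dlog y = k * e" by blast
      have "y = g ^ (k * e)" using gen_power_dlog[OF y(1)] e by simp
      also have "\<dots> = g ^ (k * (e mod w))"
        unfolding gen_power_eq_iff nw mod_mult_mult1 by simp
      finally have "y = g ^ (k * (e mod w))" .
      moreover have "e mod w < w" using nw q_minus_1_pos by (simp add: nat_0_less_mult_iff)
      ultimately show "y \<in> (\<lambda>e. g ^ (k * e)) ` {..<(q - 1) div k}" by (auto simp: w_def)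
    qed
    show "(\<lambda>e. g ^ (k * e)) ` {..<(q - 1) div k} \<subseteq> kth_powers k"
    proof
      fix y assume "y \<in> (\<lambda>e. g ^ (k * e)) ` {..<(q - 1) div k}"
      then obtain e where "y = g ^ (k * e)" by blast
      then have "y = (g ^ e) ^ k" by (simp add: power_mult[symmetric] mult.commute)
      moreover have "g ^ e \<noteq> 0" using g_nz by simp
      ultimately show "y \<in> kth_powers k" by (auto simp: kth_powers_def)
    qed
  qed
  show "inj_on (\<lambda>e. g ^ (k * e)) {..<(q - 1) div k}"
  proof (rule inj_onI)
    fix a b assume ab: "a \<in> {..<(q - 1) div k}" "b \<in> {..<(q - 1) div k}"
      and e: "g ^ (k * a) = g ^ (k * b)"
    have "k * a < q - 1" "k * b < q - 1" unfolding nw using ab k by (auto simp: w_def)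
    then have "k * a = k * b" using e gen_power_eq_iff by simp
    then show "a = b" using k by simp
  qed
qed

lemma card_kth_powers:
  assumes "k > 0" "k dvd q - 1"
  shows "card (kth_powers k :: 'a set) = (q - 1) div k"
  using kth_powers_eq_image[OF assms] by (simp add: card_image)

lemma kth_powers_mult:
  assumes "x \<in> kth_powers k" "y \<in> kth_powers k"
  shows "x * y \<in> (kth_powers k :: 'a set)"
proof -
  obtain a where a: "a \<noteq> 0" "x = a ^ k" using assms(1) by (auto simp: kth_powers_def)
  obtain b where b: "b \<noteq> 0" "y = b ^ k" using assms(2) by (auto simp: kth_powers_def)
  have "x * y = (a * b) ^ k" using a b by (simp add: power_mult_distrib)
  moreover have "a * b \<noteq> 0" using a b by simp
  ultimately show ?thesis by (auto simp: kth_powers_def)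
qed

lemma kth_powers_subset_nonzero: "kth_powers k \<subseteq> UNIV - {0::'a}"
  by (auto simp: kth_powers_def)

lemma real_card_kth_powers:
  assumes "k > 0" "k dvd q - 1"
  shows "real (card (kth_powers k :: 'a set)) = (real q - 1) / k"
  using card_kth_powers[OF assms] assms q_ge_2 by (simp add: real_of_nat_div of_nat_diff)

lemma card_non_kth_powers:
  "card (UNIV - {0::'a} - kth_powers k) = (q - 1) - card (kth_powers k :: 'a set)"
proof -
  have "card (UNIV - {0::'a} - kth_powers k) = card (UNIV - {0::'a}) - card (kth_powers k :: 'a set)"
    using kth_powers_subset_nonzero by (intro card_Diff_subset) auto
  then show ?thesis using card_q by simp
qed

lemma real_card_non_kth_powers:
  assumes "k > 0" "k dvd q - 1"
  shows "real (card (UNIV - {0::'a} - kth_powers k)) = (real q - 1) - (real q - 1) / k"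
proof -
  have "card (kth_powers k :: 'a set) \<le> card (UNIV - {0::'a})"
    using kth_powers_subset_nonzero by (intro card_mono) auto
  then show ?thesis
    using card_non_kth_powers real_card_kth_powers[OF assms] card_q q_ge_2 by (simp add: of_nat_diff)
qed

definition kchar :: "nat \<Rightarrow> nat \<Rightarrow> 'a \<Rightarrow> complex" where
  "kchar k j x = mult_char x ^ (j * ((q - 1) div k))"

lemma kchar_mult: "x \<noteq> 0 \<Longrightarrow> y \<noteq> 0 \<Longrightarrow> kchar k j (x * y) = kchar k j x * kchar k j y"
  by (simp add: kchar_def mult_char_mult power_mult_distrib)

lemma norm_kchar [simp]: "norm (kchar k j x) = 1"
  by (simp add: kchar_def norm_power)

lemma cnj_kchar_mult:
  assumes "x \<noteq> 0" "b \<noteq> 0"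
  shows "cnj (kchar k j b) * kchar k j x = kchar k j (x / b)"
proof -
  have "kchar k j (x / b) * kchar k j b = kchar k j x" using kchar_mult[of "x / b" b k j] assms by simp
  have "cnj (kchar k j b) * kchar k j b = 1"
    using complex_norm_square[of "kchar k j b"] by (simp add: mult.commute)
  have "kchar k j x = kchar k j (x / b) * kchar k j b" using \<open>kchar k j (x / b) * kchar k j b = kchar k j x\<close> by simp
  then have "cnj (kchar k j b) * kchar k j x = cnj (kchar k j b) * kchar k j b * kchar k j (x / b)"
    by (simp add: mult_ac)
  then show ?thesis using \<open>cnj (kchar k j b) * kchar k j b = 1\<close> by simp
qed

lemma sum_kchar:
  assumes k: "k > 0" "k dvd q - 1" and y: "y \<noteq> 0"
  shows "(\<Sum>j<k. kchar k j y) = (if y \<in> kth_powers k then of_nat k else 0)"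
proof -
  define w where "w = (q - 1) div k"
  have nw: "q - 1 = k * w" using k by (simp add: w_def)
  have w0: "w > 0" using nw q_minus_1_pos by (cases w) auto
  define z where "z = mult_char y ^ w"
  have fz: "kchar k j y = z ^ j" for j unfolding kchar_def z_def w_def by (simp only: power_mult[symmetric] mult.commute)
  have z: "z = root_unity (q - 1) ^ (dlog y * w)" by (simp add: z_def mult_char_def power_mult)
  have zk: "z ^ k = 1"
  proof -
    have "(q - 1) dvd dlog y * w * k" using nw by simp
    then show ?thesis unfolding z power_mult[symmetric] using root_unity_power_eq_1_iff[OF q_minus_1_pos] by blast
  qed
  have z1: "z = 1 \<longleftrightarrow> k dvd dlog y"
  proof -
    have "z = 1 \<longleftrightarrow> (q - 1) dvd dlog y * w" unfolding z using root_unity_power_eq_1_iff[OF q_minus_1_pos] by blast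
    also have "\<dots> \<longleftrightarrow> k * w dvd dlog y * w" using nw by simp
    also have "\<dots> \<longleftrightarrow> k dvd dlog y" using w0 by (simp add: dvd_times_right_cancel_iff)
    finally show ?thesis .
  qed
  show ?thesis
  proof (cases "k dvd dlog y")
    case True
    then show ?thesis using kth_powers_iff_dlog[OF k] y z1 by (simp add: fz)
  next
    case False
    then have "(\<Sum>j<k. z ^ j) = 0" using sum_powers_root_of_unity[OF zk] z1 by simp
    then show ?thesis using kth_powers_iff_dlog[OF k] y False by (simp add: fz)
  qed
qed

definition cayley_eig :: "'a set \<Rightarrow> 'a \<Rightarrow> complex" where
  "cayley_eig S b = (\<Sum>s\<in>S. add_char m (b * s))"

lemma gauss_period_expansion:
  assumes k: "k > 0" "k dvd q - 1" and b: "b \<noteq> 0"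
  shows "of_nat k * cayley_eig (kth_powers k) b = (\<Sum>j<k. cnj (kchar k j b) * gauss_sum (kchar k j))"
proof -
  define U where "U = (UNIV - {0::'a})"
  define R where "R = (kth_powers k :: 'a set)"
  have RU: "R \<subseteq> U" by (auto simp: R_def U_def kth_powers_def)
  have "(\<Sum>j<k. cnj (kchar k j b) * gauss_sum (kchar k j)) = (\<Sum>j<k. \<Sum>x\<in>U. cnj (kchar k j b) * kchar k j x * add_char m x)"
    by (simp add: gauss_sum_def U_def sum_distrib_left mult.assoc)
  also have "\<dots> = (\<Sum>x\<in>U. add_char m x * (\<Sum>j<k. kchar k j (x / b)))"
    by (subst sum.swap) (auto simp: U_def sum_distrib_left cnj_kchar_mult b intro!: sum.cong)
  also have "\<dots> = (\<Sum>x\<in>U. add_char m x * (if x / b \<in> R then of_nat k else 0))"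
    by (intro sum.cong refl) (auto simp: U_def sum_kchar[OF k] b R_def)
  also have "\<dots> = (\<Sum>s\<in>U. add_char m (b * s) * (if s \<in> R then of_nat k else 0))"
    by (rule sum.reindex_bij_witness[of _ "\<lambda>s. b * s" "\<lambda>x. x / b"]) (use b in \<open>auto simp: U_def\<close>)
  also have "\<dots> = (\<Sum>s\<in>U. if s \<in> R then of_nat k * add_char m (b * s) else 0)"
    by (intro sum.cong refl) auto
  also have "\<dots> = (\<Sum>s\<in>R. of_nat k * add_char m (b * s))"
    using RU by (simp add: sum.inter_restrict[symmetric] Int_absorb1 U_def)
  finally show ?thesis by (simp add: cayley_eig_def R_def sum_distrib_left)
qed

lemma gauss_sum_kchar_0: "gauss_sum (kchar k 0) = - 1"
  using sum_add_char_nonzero[of 1] by (simp add: gauss_sum_def kchar_def)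

lemma sum_kchar_nonzero:
  assumes k: "k > 0" "k dvd q - 1" and j: "0 < j" "j < k"
  shows "(\<Sum>x\<in>UNIV - {0}. kchar k j x) = 0"
proof -
  have "\<not> (q - 1) dvd j * ((q - 1) div k)"
  proof
    assume "(q - 1) dvd j * ((q - 1) div k)"
    then have "k * ((q - 1) div k) dvd j * ((q - 1) div k)" using k by simp
    then have "k dvd j" using k q_minus_1_pos by (auto simp: dvd_times_right_cancel_iff)
    then show False using j by (auto dest: dvd_imp_le)
  qed
  then show ?thesis
    using sum_mult_char_power_GF[of m] m_pos GF_m_eq_UNIV by (simp add: kchar_def)
qed

lemma norm_gauss_sum_kchar:
  assumes k: "k > 0" "k dvd q - 1" and j: "0 < j" "j < k"
  shows "norm (gauss_sum (kchar k j)) = sqrt q"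
proof -
  have "gauss_sum (kchar k j) * cnj (gauss_sum (kchar k j)) = of_nat q"
    by (rule gauss_sum_norm_sq) (use kchar_mult sum_kchar_nonzero[OF k j] in auto)
  then have "(norm (gauss_sum (kchar k j))) ^ 2 = q"
    using complex_norm_square[of "gauss_sum (kchar k j)"] by (metis of_nat_power of_real_eq_iff of_real_of_nat_eq of_real_power)
  then show ?thesis by (metis norm_ge_zero real_sqrt_unique of_nat_power)
qed

lemma gauss_period_expansion_nontrivial:
  assumes k: "k > 0" "k dvd q - 1" and b: "b \<noteq> 0"
  shows "of_nat k * cayley_eig (kth_powers k) b
    = - 1 + (\<Sum>j\<in>{1..<k}. cnj (kchar k j b) * gauss_sum (kchar k j))"
proof -
  have "(\<Sum>j<k. cnj (kchar k j b) * gauss_sum (kchar k j))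
      = cnj (kchar k 0 b) * gauss_sum (kchar k 0) + (\<Sum>j\<in>{1..<k}. cnj (kchar k j b) * gauss_sum (kchar k j))"
    using k(1) by (simp add: lessThan_atLeast0 sum.atLeast_Suc_lessThan)
  then show ?thesis
    using gauss_period_expansion[OF k b] gauss_sum_kchar_0 by (simp add: kchar_def)
qed

lemma norm_gauss_period_sum_le:
  assumes k: "k > 0" "k dvd q - 1"
  shows "norm (\<Sum>j\<in>{1..<k}. cnj (kchar k j b) * gauss_sum (kchar k j)) \<le> (real k - 1) * sqrt q"
proof -
  have "norm (\<Sum>j\<in>{1..<k}. cnj (kchar k j b) * gauss_sum (kchar k j))
      \<le> (\<Sum>j\<in>{1..<k}. norm (cnj (kchar k j b) * gauss_sum (kchar k j)))"
    by (rule norm_sum)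
  also have "\<dots> = (\<Sum>j\<in>{1..<k}. sqrt q)"
    by (intro sum.cong refl) (auto simp: norm_mult norm_gauss_sum_kchar[OF k])
  finally show ?thesis using k(1) by (simp add: of_nat_diff)
qed

lemma norm_gauss_period_le:
  assumes k: "k > 0" "k dvd q - 1" and b: "b \<noteq> 0"
  shows "k * norm (cayley_eig (kth_powers k) b) \<le> 1 + (k - 1) * sqrt q"
proof -
  have "k * norm (cayley_eig (kth_powers k) b) = norm (of_nat k * cayley_eig (kth_powers k) b)"
    by (simp add: norm_mult)
  also have "\<dots> \<le> norm (- 1 :: complex) + norm (\<Sum>j\<in>{1..<k}. cnj (kchar k j b) * gauss_sum (kchar k j))"
    unfolding gauss_period_expansion_nontrivial[OF k b] by (rule norm_triangle_ineq)
  finally show ?thesis using norm_gauss_period_sum_le[OF k, of b] by simp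
qed

lemma norm_gauss_period_plus_1_le:
  assumes k: "k > 0" "k dvd q - 1" and b: "b \<noteq> 0"
  shows "k * norm (1 + cayley_eig (kth_powers k) b) \<le> (k - 1) * (1 + sqrt q)"
proof -
  have "of_nat k * (1 + cayley_eig (kth_powers k) b)
      = of_nat (k - 1) + (\<Sum>j\<in>{1..<k}. cnj (kchar k j b) * gauss_sum (kchar k j))"
    using gauss_period_expansion_nontrivial[OF k b] k(1) by (simp add: distrib_left of_nat_diff)
  then have "k * norm (1 + cayley_eig (kth_powers k) b)
      = norm (of_nat (k - 1) + (\<Sum>j\<in>{1..<k}. cnj (kchar k j b) * gauss_sum (kchar k j)))"
    by (metis norm_mult norm_of_nat)
  also have "\<dots> \<le> norm (of_nat (k - 1) :: complex) + norm (\<Sum>j\<in>{1..<k}. cnj (kchar k j b) * gauss_sum (kchar k j))"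
    by (rule norm_triangle_ineq)
  also have "norm (of_nat (k - 1) :: complex) = real k - 1"
    using k(1) unfolding norm_of_nat by (simp add: of_nat_diff)
  finally show ?thesis
    using norm_gauss_period_sum_le[OF k, of b] by (simp add: algebra_simps)
qed

end

section \<open>Gauss sums over a quadratic extension\<close>

context finite_field_primitive
begin

definition ext_fibre :: "nat \<Rightarrow> 'a \<Rightarrow> 'a \<Rightarrow> 'a set" where
  "ext_fibre d a b = {x\<in>GF (2 * d). x + x ^ (p ^ d) = a \<and> x ^ (p ^ d + 1) = b}"

definition split_fibre :: "nat \<Rightarrow> 'a \<Rightarrow> 'a \<Rightarrow> ('a \<times> 'a) set" where
  "split_fibre d a b = {(u, v)\<in>GF d \<times> GF d. u + v = a \<and> u * v = b}"

lemma GF_double_trace_norm: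
  assumes "x \<in> GF (2 * d)"
  shows "x + x ^ (p ^ d) \<in> GF d" "x ^ (p ^ d + 1) \<in> GF d"
proof -
  have x2: "(x ^ (p ^ d)) ^ (p ^ d) = x" using assms
    by (simp add: GF_def power_mult[symmetric] power_add[symmetric] mult_2 flip: power_add)
  show "x + x ^ (p ^ d) \<in> GF d" using x2 by (simp add: GF_def frobenius_add add.commute)
  show "x ^ (p ^ d + 1) \<in> GF d" using x2
    by (simp add: GF_def power_mult_distrib flip: power_mult)
qed

lemma GF_double_norm_mult: "x \<in> GF (2 * d) \<Longrightarrow> x * x ^ (p ^ d) \<in> GF d"
  using GF_double_trace_norm(2)[of x d] by simp

lemma card_fibres_le_2:
  assumes a: "a \<in> GF d" and b: "b \<in> GF d"
  shows "card (ext_fibre d a b) + card (split_fibre d a b) \<le> 2"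
proof -
  define Z where "Z = {x::'a. x * x - a * x + b = 0}"
  have N2Z: "ext_fibre d a b \<subseteq> Z"
    by (auto simp: ext_fibre_def Z_def algebra_simps power_Suc2)
  have cN1: "card (split_fibre d a b) = card (Z \<inter> GF d)"
  proof (rule bij_betw_same_card[of fst])
    show "bij_betw fst (split_fibre d a b) (Z \<inter> GF d)"
    proof (rule bij_betw_byWitness[of _ "\<lambda>u. (u, a - u)"])
      show "\<forall>x\<in>split_fibre d a b. (fst x, a - fst x) = x" by (auto simp: split_fibre_def)
      show "\<forall>u\<in>Z \<inter> GF d. fst (u, a - u) = u" by simp
      show "fst ` split_fibre d a b \<subseteq> Z \<inter> GF d" by (auto simp: split_fibre_def Z_def algebra_simps)
      show "(\<lambda>u. (u, a - u)) ` (Z \<inter> GF d) \<subseteq> split_fibre d a b"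
        using a by (auto simp: split_fibre_def Z_def algebra_simps intro: GF_diff)
    qed
  qed
  show ?thesis
  proof (cases "ext_fibre d a b \<inter> GF d = {}")
    case True
    then have "ext_fibre d a b \<subseteq> Z - GF d" using N2Z by auto
    then have "card (ext_fibre d a b) \<le> card (Z - GF d)" by (intro card_mono) auto
    moreover have "card (Z - GF d) = card Z - card (Z \<inter> GF d)" by (simp add: card_Diff_subset_Int)
    moreover have "card (Z \<inter> GF d) \<le> card Z" by (simp add: card_mono)
    moreover have "card Z \<le> 2" unfolding Z_def by (rule card_quadratic_roots_le_2)
    ultimately show ?thesis using cN1 by linarith
  next
    case False
    then obtain x where x: "x \<in> ext_fibre d a b" "x \<in> GF d" by auto
    have xL: "x ^ (p ^ d) = x" using x(2) by (simp add: GF_def)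
    have ab: "a = x + x" "b = x * x" using x(1) xL by (auto simp: ext_fibre_def power_Suc2)
    have Zx: "Z \<subseteq> {x}"
    proof
      fix r assume "r \<in> Z"
      then have "(r - x) * (r - x) = 0" using ab by (simp add: Z_def algebra_simps)
      then show "r \<in> {x}" by simp
    qed
    have "card (ext_fibre d a b) \<le> card {x}" using N2Z Zx by (intro card_mono) auto
    moreover have "card (Z \<inter> GF d) \<le> card {x}" using Zx by (intro card_mono) auto
    ultimately show ?thesis using cN1 by simp
  qed
qed

lemma sum_card_ext_fibre:
  assumes d: "d > 0" "2 * d dvd m"
  shows "(\<Sum>y\<in>GF d \<times> GF d. card (ext_fibre d (fst y) (snd y))) = p ^ (2 * d)"
proof -
  have "(\<Sum>y\<in>GF d \<times> GF d. of_nat (card {x\<in>GF (2 * d). (x + x ^ (p ^ d), x ^ (p ^ d + 1)) = y}) * (1::nat))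
        = (\<Sum>x\<in>GF (2 * d). 1)"
    by (rule sum_by_fibres[symmetric]) (auto simp: GF_double_trace_norm GF_double_norm_mult)
  moreover have "{x\<in>GF (2 * d). (x + x ^ (p ^ d), x ^ (p ^ d + 1)) = y} = ext_fibre d (fst y) (snd y)" for y
    by (cases y) (auto simp: ext_fibre_def)
  ultimately show ?thesis using card_GF[of "2 * d"] d by simp
qed

lemma sum_card_split_fibre:
  assumes d: "d > 0" "2 * d dvd m"
  shows "(\<Sum>y\<in>GF d \<times> GF d. card (split_fibre d (fst y) (snd y))) = p ^ (2 * d)"
proof -
  have dm: "d dvd m" using d(2) by (metis dvd_mult_right)
  have "(\<Sum>y\<in>GF d \<times> GF d. of_nat (card {x\<in>GF d \<times> GF d. (fst x + snd x, fst x * snd x) = y}) * (1::nat))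
        = (\<Sum>x\<in>GF d \<times> GF d. 1)"
    by (rule sum_by_fibres[symmetric]) (auto intro: GF_add GF_mult)
  moreover have "{x\<in>GF d \<times> GF d. (fst x + snd x, fst x * snd x) = y} = split_fibre d (fst y) (snd y)" for y
    by (cases y) (auto simp: split_fibre_def)
  ultimately show ?thesis using card_GF[OF dm d(1)] by (simp add: card_cartesian_product power_mult_distrib
        flip: power_add mult_2)
qed

lemma card_fibres_eq_2:
  assumes d: "d > 0" "2 * d dvd m" and ab: "a \<in> GF d" "b \<in> GF d"
  shows "card (ext_fibre d a b) + card (split_fibre d a b) = 2"
proof -
  have dm: "d dvd m" using d(2) by (metis dvd_mult_right)
  have "(\<Sum>y\<in>GF d \<times> GF d. card (ext_fibre d (fst y) (snd y)) + card (split_fibre d (fst y) (snd y)))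
        = (\<Sum>y\<in>GF d \<times> GF d. 2)"
    using sum_card_split_fibre[OF d] sum_card_ext_fibre[OF d] card_GF[OF dm d(1)]
    by (simp add: sum.distrib card_cartesian_product power_mult_distrib flip: power_add mult_2)
  from sum_mono_inv[OF this _ _ finite] ab show ?thesis
    using card_fibres_le_2 by auto
qed

text \<open>Counting \<open>x \<in> GF (2d)\<close> by trace and norm: the fibre over \<open>(a, b)\<close> consists of the roots of
  \<open>X\<^sup>2 - a X + b\<close> outside \<open>GF d\<close>, and there are \<open>2 - (number of ordered factorisations over GF d)\<close> of them.\<close>
lemma sum_GF_double_by_trace_norm:
  fixes F :: "'a \<times> 'a \<Rightarrow> complex"
  assumes d: "d > 0" "2 * d dvd m"
  shows "(\<Sum>x\<in>GF (2 * d). F (x + x ^ (p ^ d), x ^ (p ^ d + 1)))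
    = 2 * (\<Sum>y\<in>GF d \<times> GF d. F y) - (\<Sum>(u, v)\<in>GF d \<times> GF d. F (u + v, u * v))"
proof -
  let ?T = "GF d \<times> GF d"
  have "{x\<in>GF (2 * d). (x + x ^ (p ^ d), x ^ (p ^ d + 1)) = y} = ext_fibre d (fst y) (snd y)" for y
    by (cases y) (auto simp: ext_fibre_def)
  moreover have "(\<Sum>x\<in>GF (2 * d). F (x + x ^ (p ^ d), x ^ (p ^ d + 1)))
      = (\<Sum>y\<in>?T. of_nat (card {x\<in>GF (2 * d). (x + x ^ (p ^ d), x ^ (p ^ d + 1)) = y}) * F y)"
    by (rule sum_by_fibres) (auto simp: GF_double_trace_norm GF_double_norm_mult)
  ultimately have "(\<Sum>x\<in>GF (2 * d). F (x + x ^ (p ^ d), x ^ (p ^ d + 1)))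
      = (\<Sum>y\<in>?T. of_nat (card (ext_fibre d (fst y) (snd y))) * F y)"
    by simp
  also have "\<dots> = (\<Sum>y\<in>?T. (2 - of_nat (card (split_fibre d (fst y) (snd y)))) * F y)"
  proof (intro sum.cong refl)
    fix y assume "y \<in> ?T"
    then have "card (ext_fibre d (fst y) (snd y)) + card (split_fibre d (fst y) (snd y)) = 2"
      using card_fibres_eq_2[OF d] by auto
    then have "(of_nat (card (ext_fibre d (fst y) (snd y))) :: complex)
        = 2 - of_nat (card (split_fibre d (fst y) (snd y)))"
      by (metis add_diff_cancel_right' of_nat_add of_nat_numeral)
    then show "of_nat (card (ext_fibre d (fst y) (snd y))) * F y
        = (2 - of_nat (card (split_fibre d (fst y) (snd y)))) * F y"
      by simp
  qed
  also have "\<dots> = 2 * (\<Sum>y\<in>?T. F y) - (\<Sum>y\<in>?T. of_nat (card (split_fibre d (fst y) (snd y))) * F y)"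
    by (simp add: algebra_simps sum_subtractf sum_distrib_left sum_distrib_right)
  also have "(\<Sum>y\<in>?T. of_nat (card (split_fibre d (fst y) (snd y))) * F y)
      = (\<Sum>(u, v)\<in>?T. F (u + v, u * v))"
  proof -
    have "{x\<in>?T. (fst x + snd x, fst x * snd x) = y} = split_fibre d (fst y) (snd y)" for y
      by (cases y) (auto simp: split_fibre_def)
    moreover have "(\<Sum>x\<in>?T. F (fst x + snd x, fst x * snd x))
        = (\<Sum>y\<in>?T. of_nat (card {x\<in>?T. (fst x + snd x, fst x * snd x) = y}) * F y)"
      by (rule sum_by_fibres) (auto intro: GF_add GF_mult)
    ultimately show ?thesis by (simp add: case_prod_unfold)
  qed
  finally show ?thesis .
qed

definition sub_gauss_sum :: "nat \<Rightarrow> ('a \<Rightarrow> complex) \<Rightarrow> complex" where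
  "sub_gauss_sum d f = (\<Sum>x\<in>GF d - {0}. f x * add_char d x)"

lemma sub_gauss_sum_m: "sub_gauss_sum m f = gauss_sum f" by (simp add: sub_gauss_sum_def gauss_sum_def GF_m_eq_UNIV)

lemma add_char_double: "x \<in> GF (2 * d) \<Longrightarrow> add_char (2 * d) x = add_char d (x + x ^ (p ^ d))"
  by (simp add: add_char_def trace_double)

text \<open>The Davenport--Hasse lifting theorem for a quadratic extension, with the lift
  \<open>f \<circ> N\<close> of \<open>f\<close> along the norm \<open>N x = x ^ (p ^ d + 1)\<close>.\<close>
lemma sub_gauss_sum_lift:
  assumes d: "d > 0" "2 * d dvd m"
    and mult: "\<And>u v. u \<in> GF d \<Longrightarrow> v \<in> GF d \<Longrightarrow> u \<noteq> 0 \<Longrightarrow> v \<noteq> 0 \<Longrightarrow> f (u * v) = f u * f v"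
  shows "sub_gauss_sum (2 * d) (\<lambda>x. f (x ^ (p ^ d + 1))) = - (sub_gauss_sum d f * sub_gauss_sum d f)"
proof -
  have dm: "d dvd m" using d(2) by (metis dvd_mult_right)
  define F :: "'a \<times> 'a \<Rightarrow> complex"
    where "F y = (if snd y = 0 then 0 else f (snd y) * add_char d (fst y))" for y
  have "sub_gauss_sum (2 * d) (\<lambda>x. f (x ^ (p ^ d + 1))) = (\<Sum>x\<in>GF (2 * d) - {0}. F (x + x ^ (p ^ d), x ^ (p ^ d + 1)))"
    unfolding sub_gauss_sum_def by (intro sum.cong refl) (auto simp: F_def add_char_double)
  also have "\<dots> = (\<Sum>x\<in>GF (2 * d). F (x + x ^ (p ^ d), x ^ (p ^ d + 1)))"
    by (rule sum_remove_zero[symmetric]) (auto simp: F_def)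
  also have "\<dots> = 2 * (\<Sum>y\<in>GF d \<times> GF d. F y) - (\<Sum>(u, v)\<in>GF d \<times> GF d. F (u + v, u * v))"
    by (rule sum_GF_double_by_trace_norm[OF d])
  also have "(\<Sum>y\<in>GF d \<times> GF d. F y) = (\<Sum>a\<in>GF d. \<Sum>b\<in>GF d. F (a, b))"
    by (simp add: sum.cartesian_product case_prod_unfold)
  also have "\<dots> = (\<Sum>b\<in>GF d. \<Sum>a\<in>GF d. F (a, b))"
    by (rule sum.swap)
  also have "\<dots> = (\<Sum>b\<in>GF d. (if b = 0 then 0 else f b) * (\<Sum>a\<in>GF d. add_char d a))"
    by (intro sum.cong refl) (auto simp: F_def sum_distrib_left)
  also have "\<dots> = 0" using sum_add_char[OF dm d(1)] by simp
  also have "(\<Sum>(u, v)\<in>GF d \<times> GF d. F (u + v, u * v)) = (\<Sum>u\<in>GF d - {0}. \<Sum>v\<in>GF d - {0}. F (u + v, u * v))"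
    by (simp add: sum.cartesian_product[symmetric] sum_remove_zero F_def)
  also have "\<dots> = (\<Sum>u\<in>GF d - {0}. \<Sum>v\<in>GF d - {0}. (f u * add_char d u) * (f v * add_char d v))"
    by (intro sum.cong refl) (auto simp: F_def mult add_char_add mult_ac)
  also have "\<dots> = sub_gauss_sum d f * sub_gauss_sum d f"
    by (simp add: sub_gauss_sum_def sum_product)
  finally show ?thesis by simp
qed

lemma exists_trace_zero_nonzero:
  assumes d: "d > 0" "2 * d dvd m"
  shows "\<exists>z\<in>GF (2 * d). z \<noteq> 0 \<and> z + z ^ (p ^ d) = 0"
proof -
  have dm: "d dvd m" using d(2) by (metis dvd_mult_right)
  define T where "T x = x + x ^ (p ^ d)" for x :: 'a
  have sub: "T ` GF (2 * d) \<subseteq> GF d" using GF_double_trace_norm by (auto simp: T_def)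
  have "card (T ` GF (2 * d)) \<le> p ^ d" using card_mono[OF _ sub] card_GF[OF dm d(1)] by simp
  moreover have "p ^ d < p ^ (2 * d)" using d p_ge_2 by (intro power_strict_increasing) auto
  moreover have "card (GF (2 * d)) = p ^ (2 * d)" using card_GF[of "2 * d"] d by simp
  ultimately have "\<not> inj_on T (GF (2 * d))" by (metis card_image less_le_not_le)
  then obtain x y where xy: "x \<in> GF (2 * d)" "y \<in> GF (2 * d)" "x \<noteq> y" "T x = T y"
    by (auto simp: inj_on_def)
  have "T (x - y) = 0" using xy(4) by (simp add: T_def frobenius_diff algebra_simps)
  moreover have "x - y \<in> GF (2 * d)" using xy by (intro GF_diff)
  ultimately show ?thesis using xy(3) by (intro bexI[of _ "x - y"]) (auto simp: T_def)
qed

lemma sub_gauss_sum_double_scale: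
  assumes mult: "\<And>x y. x \<in> GF (2 * d) \<Longrightarrow> y \<in> GF (2 * d) \<Longrightarrow> x \<noteq> 0 \<Longrightarrow> y \<noteq> 0 \<Longrightarrow> f (x * y) = f x * f y"
    and triv: "\<And>c. c \<in> GF d \<Longrightarrow> c \<noteq> 0 \<Longrightarrow> f c = 1"
    and c: "c \<in> GF d" "c \<noteq> 0"
  shows "sub_gauss_sum (2 * d) f = (\<Sum>x\<in>GF (2 * d) - {0}. f x * add_char d (c * (x + x ^ (p ^ d))))"
proof -
  have c2: "c \<in> GF (2 * d)" using GF_mono[of d "2 * d"] c by auto
  have cL: "c ^ (p ^ d) = c" using c(1) by (simp add: GF_def)
  have "sub_gauss_sum (2 * d) f = (\<Sum>x\<in>GF (2 * d) - {0}. f x * add_char d (x + x ^ (p ^ d)))"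
    unfolding sub_gauss_sum_def by (intro sum.cong refl) (auto simp: add_char_double)
  also have "\<dots> = (\<Sum>y\<in>GF (2 * d) - {0}. f (c * y) * add_char d (c * y + (c * y) ^ (p ^ d)))"
    by (rule sum.reindex_bij_witness[of _ "\<lambda>y. c * y" "\<lambda>x. x / c"])
      (use c c2 in \<open>auto intro: GF_mult GF_divide\<close>)
  also have "\<dots> = (\<Sum>y\<in>GF (2 * d) - {0}. f y * add_char d (c * (y + y ^ (p ^ d))))"
  proof (rule sum.cong[OF refl])
    fix y assume y: "y \<in> GF (2 * d) - {0}"
    have "f (c * y) = f y" using y c c2 mult triv by simp
    moreover have "c * y + (c * y) ^ (p ^ d) = c * (y + y ^ (p ^ d))"
      by (simp add: power_mult_distrib cL algebra_simps)
    ultimately show "f (c * y) * add_char d (c * y + (c * y) ^ (p ^ d))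
        = f y * add_char d (c * (y + y ^ (p ^ d)))" by simp
  qed
  finally show ?thesis .
qed

lemma sum_trace_kernel:
  assumes z0: "z0 \<in> GF (2 * d)" "z0 \<noteq> 0" "z0 + z0 ^ (p ^ d) = 0"
  shows "(\<Sum>x\<in>{x\<in>GF (2 * d) - {0}. x + x ^ (p ^ d) = 0}. h x) = (\<Sum>c\<in>GF d - {0}. h (z0 * c))"
proof (rule sum.reindex_bij_witness[of _ "\<lambda>c. z0 * c" "\<lambda>x. x / z0"])
  have z0L: "z0 ^ (p ^ d) = - z0" using z0(3) by (simp add: eq_neg_iff_add_eq_0 add.commute)
  fix x assume "x \<in> {x\<in>GF (2 * d) - {0}. x + x ^ (p ^ d) = 0}"
  then have x: "x \<noteq> 0" "x ^ (p ^ d) = - x"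
    by (auto simp: eq_neg_iff_add_eq_0 add.commute)
  show "z0 * (x / z0) = x" using z0(2) by simp
  have "(x / z0) ^ (p ^ d) = x / z0" using x(2) z0L by (simp add: power_divide)
  then show "x / z0 \<in> GF d - {0}" using x z0(2) by (auto simp: GF_def)
next
  fix c assume c: "c \<in> GF d - {0}"
  then have cL: "c ^ (p ^ d) = c" by (simp add: GF_def)
  show "z0 * c / z0 = c" using z0(2) by simp
  have "z0 * c \<in> GF (2 * d)" using c GF_mono[of d "2 * d"] z0(1) by (auto intro: GF_mult)
  moreover have "z0 * c + (z0 * c) ^ (p ^ d) = c * (z0 + z0 ^ (p ^ d))"
    by (simp add: power_mult_distrib cL algebra_simps)
  ultimately show "z0 * c \<in> {x\<in>GF (2 * d) - {0}. x + x ^ (p ^ d) = 0}" using z0 c by auto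
qed (use z0 in simp)

text \<open>A character trivial on \<open>GF d\<^sup>*\<close> but not on \<open>GF (2d)\<^sup>*\<close> has a pure Gauss sum: averaging
  over all scalings \<open>c \<in> GF d\<^sup>*\<close> kills every term with nonzero relative trace, and the
  trace kernel is the line \<open>z\<^sub>0 \<cdot> GF d\<close>, on which the character is constant.\<close>
lemma sub_gauss_sum_pure:
  assumes d: "d > 0" "2 * d dvd m"
    and z0: "z0 \<in> GF (2 * d)" "z0 \<noteq> 0" "z0 + z0 ^ (p ^ d) = 0"
    and mult: "\<And>x y. x \<in> GF (2 * d) \<Longrightarrow> y \<in> GF (2 * d) \<Longrightarrow> x \<noteq> 0 \<Longrightarrow> y \<noteq> 0 \<Longrightarrow> f (x * y) = f x * f y"
    and triv: "\<And>c. c \<in> GF d \<Longrightarrow> c \<noteq> 0 \<Longrightarrow> f c = 1"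
    and nontriv: "(\<Sum>x\<in>GF (2 * d) - {0}. f x) = 0"
  shows "sub_gauss_sum (2 * d) f = of_nat (p ^ d) * f z0"
proof -
  have dm: "d dvd m" using d(2) by (metis dvd_mult_right)
  define A where "A = GF (2 * d) - {0}"
  define C where "C = GF d - {0}"
  define T where "T x = x + x ^ (p ^ d)" for x :: 'a
  have scale: "sub_gauss_sum (2 * d) f = (\<Sum>x\<in>A. f x * add_char d (c * T x))" if "c \<in> C" for c
    using sub_gauss_sum_double_scale[OF mult triv] that by (simp add: A_def C_def T_def)
  have "of_nat (card C) * sub_gauss_sum (2 * d) f = (\<Sum>c\<in>C. sub_gauss_sum (2 * d) f)" by simp
  also have "\<dots> = (\<Sum>c\<in>C. \<Sum>x\<in>A. f x * add_char d (c * T x))"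
    using scale by (intro sum.cong refl) auto
  also have "\<dots> = (\<Sum>x\<in>A. f x * (\<Sum>c\<in>C. add_char d (c * T x)))"
    by (subst sum.swap) (simp add: sum_distrib_left)
  also have "\<dots> = (\<Sum>x\<in>A. f x * (if T x = 0 then of_nat (p ^ d) - 1 else - 1))"
    unfolding C_def using GF_double_trace_norm(1)
    by (intro sum.cong refl) (auto simp: A_def T_def sum_add_char_scaled_nonzero[OF dm d(1)])
  also have "\<dots> = (\<Sum>x\<in>A. f x * (if T x = 0 then of_nat (p ^ d) else 0) - f x)"
    by (intro sum.cong refl) (auto simp: algebra_simps)
  also have "\<dots> = (\<Sum>x\<in>A. f x * (if T x = 0 then of_nat (p ^ d) else 0))"
    using nontriv by (simp add: sum_subtractf A_def)
  also have "\<dots> = (\<Sum>x\<in>A. if T x = 0 then of_nat (p ^ d) * f x else 0)"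
    by (intro sum.cong refl) auto
  also have "\<dots> = of_nat (p ^ d) * (\<Sum>x\<in>{x\<in>A. T x = 0}. f x)"
  proof -
    have "finite A" by (simp add: A_def)
    then show ?thesis by (simp add: sum.inter_filter sum_distrib_left if_distrib cong: if_cong)
  qed
  also have "(\<Sum>x\<in>{x\<in>A. T x = 0}. f x) = (\<Sum>c\<in>C. f (z0 * c))"
    unfolding A_def C_def T_def by (rule sum_trace_kernel[OF z0])
  also have "\<dots> = (\<Sum>c\<in>C. f z0)"
    using GF_mono[of d "2 * d"] z0 by (intro sum.cong refl) (auto simp: C_def mult triv)
  also have "\<dots> = of_nat (card C) * f z0" by simp
  finally have "of_nat (card C) * sub_gauss_sum (2 * d) f = of_nat (card C) * (of_nat (p ^ d) * f z0)"
    by simp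
  moreover have "card C \<noteq> 0" using card_GF_nonzero[OF dm d(1)] power_ge_2[OF d(1)] by (simp add: C_def)
  ultimately show ?thesis by simp
qed

end

section \<open>Gauss sums in the semiprimitive case\<close>

context finite_field_primitive
begin

definition level_char :: "nat \<Rightarrow> nat \<Rightarrow> nat \<Rightarrow> nat \<Rightarrow> 'a \<Rightarrow> complex" where
  "level_char k d0 l j x = mult_char x ^ (j * ((p ^ (d0 * 2 ^ l) - 1) div k))"

lemma level_char_mult: "x \<noteq> 0 \<Longrightarrow> y \<noteq> 0 \<Longrightarrow> level_char k d0 l j (x * y) = level_char k d0 l j x * level_char k d0 l j y"
  by (simp add: level_char_def mult_char_mult power_mult_distrib)

lemma level_char_power: "level_char k d0 l j x = level_char k d0 l 1 x ^ j"
  by (simp add: level_char_def power_mult[symmetric] mult.commute)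

lemma norm_level_char [simp]: "norm (level_char k d0 l j x) = 1" by (simp add: level_char_def norm_power)

lemma dvd_level_minus_1:
  assumes "k dvd p ^ d0 + 1" "l > 0"
  shows "k dvd p ^ (d0 * 2 ^ l) - 1"
proof -
  have "p ^ (2 * d0) = p ^ d0 * p ^ d0" by (simp add: mult_2 power_add)
  then have "p ^ (2 * d0) - 1 = (p ^ d0 + 1) * (p ^ d0 - 1)" by (simp only: square_minus_1_nat)
  then have "k dvd p ^ (2 * d0) - 1" using assms(1) by (metis dvd_mult2)
  moreover have "p ^ (2 * d0) - 1 dvd p ^ (d0 * 2 ^ l) - 1"
  proof -
    obtain i where l: "l = Suc i" using assms(2) by (cases l) auto
    have "p ^ (d0 * 2 ^ l) = (p ^ (2 * d0)) ^ (2 ^ i)" by (simp add: l power_mult[symmetric] mult_ac)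
    then show ?thesis using nat_power_minus_1_dvd[of "p ^ (2 * d0)" "2 ^ i"] by simp
  qed
  ultimately show ?thesis by (rule dvd_trans)
qed

lemma level_char_norm:
  assumes k: "k dvd p ^ (d0 * 2 ^ l) - 1" and x: "x \<noteq> 0"
  shows "level_char k d0 l j (x ^ (p ^ (d0 * 2 ^ l) + 1)) = level_char k d0 (Suc l) j x"
proof -
  define L where "L = p ^ (d0 * 2 ^ l)"
  have L2: "p ^ (d0 * 2 ^ Suc l) = L * L" by (simp add: L_def power_mult[symmetric] mult_ac power2_eq_square
        flip: power_add mult_2)
  have L1: "L \<ge> 1" using p_ge_2 by (simp add: L_def)
  have e: "(L + 1) * (j * ((L - 1) div k)) = j * ((L * L - 1) div k)"
  proof -
    obtain c where c: "L - 1 = k * c" using k by (auto simp: L_def)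
    show ?thesis
    proof (cases "k = 0")
      case True then show ?thesis by simp
    next
      case False
      have d1: "(L - 1) div k = c" using c False by simp
      have "L * L - 1 = (L + 1) * (k * c)" by (simp only: square_minus_1_nat c)
      then have d2: "(L * L - 1) div k = (L + 1) * c" using False by simp
      show ?thesis by (simp only: d1 d2 mult_ac)
    qed
  qed
  have "level_char k d0 l j (x ^ (L + 1)) = (mult_char x ^ (L + 1)) ^ (j * ((L - 1) div k))"
    unfolding level_char_def mult_char_power[OF x] L_def by simp
  also have "\<dots> = mult_char x ^ (j * ((L * L - 1) div k))" by (simp only: power_mult[symmetric] e)
  also have "\<dots> = level_char k d0 (Suc l) j x" unfolding level_char_def L2 by simp
  finally show ?thesis by (simp add: L_def)
qed

end

locale semiprimitive = finite_field_primitive p m g for p m :: nat and g :: "'a::{finite,field}" +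
  fixes k d0 J :: nat
  assumes k_pos: "k > 0" and kd: "k dvd p ^ d0 + 1" and d0_pos: "d0 > 0"
    and J_pos: "J \<ge> 1" and mJ: "m = d0 * 2 ^ J"
begin

lemma level_dvd_m: "l \<le> J \<Longrightarrow> d0 * 2 ^ l dvd m"
  unfolding mJ by (simp add: le_imp_power_dvd)

lemma d0_dvd_m: "d0 dvd m" unfolding mJ by simp

lemma double_d0_dvd_m: "2 * d0 dvd m" using level_dvd_m[of 1] J_pos by (simp add: mult.commute)

lemma Q2: "p ^ (d0 * 2) = p ^ d0 * p ^ d0" by (simp add: power_mult power2_eq_square)

lemma level_char_1_eq: "level_char k d0 (Suc 0) j x = mult_char x ^ (j * ((p ^ d0 * p ^ d0 - 1) div k))"
  by (simp add: level_char_def Q2)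

lemma level_char_1_trivial:
  assumes c: "c \<in> GF d0" "c \<noteq> 0"
  shows "level_char k d0 (Suc 0) j c = 1"
proof -
  define Q where "Q = p ^ d0"
  define w0 where "w0 = (q - 1) div (Q - 1)"
  have nw: "q - 1 = w0 * (Q - 1)" using power_minus_1_dvd_q_minus_1[OF d0_dvd_m] by (simp add: w0_def Q_def)
  obtain e where e: "c = g ^ (w0 * e)" using GF_nonzero_iff[OF d0_dvd_m d0_pos c(2)] c(1) by (auto simp: w0_def Q_def)
  obtain t where t: "Q + 1 = k * t" using kd by (auto simp: Q_def)
  have "(Q * Q - 1) div k = (Q - 1) * t"
  proof -
    have "Q * Q - 1 = k * ((Q - 1) * t)" by (simp only: square_minus_1_nat t mult_ac)
    then show ?thesis using k_pos by simp
  qed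
  then have "level_char k d0 (Suc 0) j c = mult_char c ^ (j * ((Q - 1) * t))"
    unfolding level_char_1_eq Q_def[symmetric] by simp
  also have "\<dots> = (root_unity (q - 1) ^ (w0 * e)) ^ (j * ((Q - 1) * t))" unfolding e mult_char_gen_power by simp
  finally have "level_char k d0 (Suc 0) j c = root_unity (q - 1) ^ (w0 * e * (j * ((Q - 1) * t)))"
    by (simp only: power_mult)
  also have "\<dots> = 1"
  proof -
    have "w0 * e * (j * ((Q - 1) * t)) = (q - 1) * (e * j * t)" unfolding nw by (simp add: mult_ac)
    then have "(q - 1) dvd w0 * e * (j * ((Q - 1) * t))" by (metis dvd_triv_left)
    then show ?thesis using root_unity_power_eq_1_iff[OF q_minus_1_pos] by blast
  qed
  finally show ?thesis .
qed

lemma sum_level_char_1: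
  assumes j: "0 < j" "j < k"
  shows "(\<Sum>x\<in>GF (2 * d0) - {0}. level_char k d0 (Suc 0) j x) = 0"
proof -
  define Q where "Q = p ^ d0"
  obtain t where t: "Q * Q - 1 = k * t"
  proof -
    have "k dvd Q * Q - 1" using kd unfolding Q_def square_minus_1_nat by (metis dvd_mult2)
    then show ?thesis using that by blast
  qed
  have "Q \<ge> 2" using power_ge_2[OF d0_pos] by (simp add: Q_def)
  then have "Q * Q - 1 > 0" using mult_le_mono[of 2 Q 2 Q] by simp
  then have "t > 0" using t by (cases t) auto
  have "\<not> (Q * Q - 1) dvd j * t"
  proof
    assume "(Q * Q - 1) dvd j * t"
    then have "k * t dvd j * t" by (simp only: t)
    then have "k dvd j" using \<open>t > 0\<close> by simp
    then show False using j by (auto dest: dvd_imp_le)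
  qed
  moreover have "p ^ (2 * d0) = Q * Q" by (simp add: Q_def mult_2 power_add)
  moreover have "level_char k d0 (Suc 0) j x = mult_char x ^ (j * t)" for x
    unfolding level_char_1_eq Q_def[symmetric] t using k_pos by simp
  ultimately show ?thesis
    using sum_mult_char_power_GF[OF double_d0_dvd_m] d0_pos by simp
qed

definition trace_zero_elt :: 'a where "trace_zero_elt = (SOME z. z \<in> GF (2 * d0) \<and> z \<noteq> 0 \<and> z + z ^ (p ^ d0) = 0)"

lemma trace_zero_elt: "trace_zero_elt \<in> GF (2 * d0)" "trace_zero_elt \<noteq> 0" "trace_zero_elt + trace_zero_elt ^ (p ^ d0) = 0"
proof -
  have "\<exists>z. z \<in> GF (2 * d0) \<and> z \<noteq> 0 \<and> z + z ^ (p ^ d0) = 0"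
    using exists_trace_zero_nonzero[OF d0_pos double_d0_dvd_m] by blast
  then have "trace_zero_elt \<in> GF (2 * d0) \<and> trace_zero_elt \<noteq> 0 \<and> trace_zero_elt + trace_zero_elt ^ (p ^ d0) = 0"
    unfolding trace_zero_elt_def by (rule someI_ex)
  then show "trace_zero_elt \<in> GF (2 * d0)" "trace_zero_elt \<noteq> 0" "trace_zero_elt + trace_zero_elt ^ (p ^ d0) = 0" by auto
qed

lemma gauss_sum_level_1:
  assumes j: "0 < j" "j < k"
  shows "sub_gauss_sum (d0 * 2) (level_char k d0 (Suc 0) j) = of_nat (p ^ d0) * (level_char k d0 (Suc 0) (Suc 0) trace_zero_elt) ^ j"
proof -
  have "sub_gauss_sum (2 * d0) (level_char k d0 (Suc 0) j) = of_nat (p ^ d0) * level_char k d0 (Suc 0) j trace_zero_elt"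
    by (rule sub_gauss_sum_pure[OF d0_pos double_d0_dvd_m trace_zero_elt]) (auto simp: level_char_mult level_char_1_trivial sum_level_char_1[OF j])
  then show ?thesis by (simp add: mult.commute level_char_power[of k d0 "Suc 0" j])
qed

lemma level_char_zeta_sq: "(level_char k d0 (Suc 0) (Suc 0) trace_zero_elt) ^ 2 = 1"
proof -
  have zz: "trace_zero_elt * trace_zero_elt \<in> GF d0"
  proof -
    have "trace_zero_elt ^ (p ^ d0) = - trace_zero_elt" using trace_zero_elt(3) by (simp add: eq_neg_iff_add_eq_0 add.commute)
    then show ?thesis by (simp add: GF_def power_mult_distrib)
  qed
  have "(level_char k d0 (Suc 0) (Suc 0) trace_zero_elt) ^ 2 = level_char k d0 (Suc 0) 1 (trace_zero_elt * trace_zero_elt)" using level_char_mult trace_zero_elt(2) by (simp add: power2_eq_square)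
  also have "\<dots> = 1" using level_char_1_trivial[OF zz] trace_zero_elt(2) by simp
  finally show ?thesis .
qed

lemma gauss_sum_level_Suc:
  assumes l: "1 \<le> l" "Suc l \<le> J"
  shows "sub_gauss_sum (d0 * 2 ^ Suc l) (level_char k d0 (Suc l) j) = - (sub_gauss_sum (d0 * 2 ^ l) (level_char k d0 l j) * sub_gauss_sum (d0 * 2 ^ l) (level_char k d0 l j))"
proof -
  have dd: "2 * (d0 * 2 ^ l) dvd m" using level_dvd_m[OF l(2)] by (simp add: mult_ac)
  have dpos: "d0 * 2 ^ l > 0" using d0_pos by simp
  have kl: "k dvd p ^ (d0 * 2 ^ l) - 1" using dvd_level_minus_1[OF kd] l by simp
  have "sub_gauss_sum (2 * (d0 * 2 ^ l)) (\<lambda>x. level_char k d0 l j (x ^ (p ^ (d0 * 2 ^ l) + 1)))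
      = - (sub_gauss_sum (d0 * 2 ^ l) (level_char k d0 l j) * sub_gauss_sum (d0 * 2 ^ l) (level_char k d0 l j))"
    by (rule sub_gauss_sum_lift[OF dpos dd]) (simp add: level_char_mult)
  moreover have "sub_gauss_sum (2 * (d0 * 2 ^ l)) (\<lambda>x. level_char k d0 l j (x ^ (p ^ (d0 * 2 ^ l) + 1)))
      = sub_gauss_sum (d0 * 2 ^ Suc l) (level_char k d0 (Suc l) j)"
  proof -
    have e2: "2 * (d0 * 2 ^ l) = d0 * 2 ^ Suc l" by simp
    show ?thesis unfolding sub_gauss_sum_def e2
    proof (rule sum.cong[OF refl])
      fix x assume "x \<in> GF (d0 * 2 ^ Suc l) - {0}"
      then have x0: "x \<noteq> 0" by simp
      show "level_char k d0 l j (x ^ (p ^ (d0 * 2 ^ l) + 1)) * add_char (d0 * 2 ^ Suc l) x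
          = level_char k d0 (Suc l) j x * add_char (d0 * 2 ^ Suc l) x"
        by (simp only: level_char_norm[OF kl x0])
    qed
  qed
  ultimately show ?thesis by simp
qed

lemma gauss_sum_level_2:
  assumes J2: "2 \<le> J" and j: "0 < j" "j < k"
  shows "sub_gauss_sum (d0 * 2 ^ 2) (level_char k d0 2 j) = - of_nat (p ^ (d0 * 2))"
proof -
  define eta where "eta = level_char k d0 (Suc 0) (Suc 0) trace_zero_elt"
  define A where "A = sub_gauss_sum (d0 * 2) (level_char k d0 (Suc 0) j)"
  have A: "A = of_nat (p ^ d0) * eta ^ j" using gauss_sum_level_1[OF j] by (simp add: A_def eta_def)
  have ee: "eta ^ j * eta ^ j = 1"
  proof -
    have "eta ^ j * eta ^ j = (eta ^ 2) ^ j" by (simp add: power2_eq_square power_mult_distrib)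
    then show ?thesis using level_char_zeta_sq by (simp add: eta_def)
  qed
  have AA: "A * A = of_nat (p ^ d0) * of_nat (p ^ d0)"
  proof -
    have "A * A = of_nat (p ^ d0) * of_nat (p ^ d0) * (eta ^ j * eta ^ j)" by (simp add: A mult_ac)
    then show ?thesis using ee by simp
  qed
  have "sub_gauss_sum (d0 * 2 ^ Suc 1) (level_char k d0 (Suc 1) j) = - (sub_gauss_sum (d0 * 2 ^ 1) (level_char k d0 1 j) * sub_gauss_sum (d0 * 2 ^ 1) (level_char k d0 1 j))"
    using gauss_sum_level_Suc[of 1] J2 by simp
  also have "sub_gauss_sum (d0 * 2 ^ 1) (level_char k d0 1 j) = A" by (simp add: A_def)
  finally have "sub_gauss_sum (d0 * 2 ^ Suc 1) (level_char k d0 (Suc 1) j) = - (of_nat (p ^ d0) * of_nat (p ^ d0))"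
    using AA by simp
  moreover have "(of_nat (p ^ d0) * of_nat (p ^ d0) :: complex) = of_nat (p ^ (d0 * 2))"
    by (simp add: power_mult power2_eq_square)
  ultimately show ?thesis by (simp add: numeral_2_eq_2)
qed

lemma gauss_sum_level_ge_2:
  assumes "i + 2 \<le> J" and j: "0 < j" "j < k"
  shows "sub_gauss_sum (d0 * 2 ^ (i + 2)) (level_char k d0 (i + 2) j) = - of_nat (p ^ (d0 * 2 ^ (i + 1)))"
  using assms(1)
proof (induction i)
  case 0 then show ?case using gauss_sum_level_2[OF _ j] by (simp add: numeral_2_eq_2)
next
  case (Suc i)
  have "sub_gauss_sum (d0 * 2 ^ Suc (i + 2)) (level_char k d0 (Suc (i + 2)) j)
      = - (sub_gauss_sum (d0 * 2 ^ (i + 2)) (level_char k d0 (i + 2) j) * sub_gauss_sum (d0 * 2 ^ (i + 2)) (level_char k d0 (i + 2) j))"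
    using gauss_sum_level_Suc[of "i + 2"] Suc.prems by simp
  also have "\<dots> = - (of_nat (p ^ (d0 * 2 ^ (i + 1))) * of_nat (p ^ (d0 * 2 ^ (i + 1))))"
    using Suc by simp
  also have "\<dots> = - of_nat (p ^ (d0 * 2 ^ (Suc i + 1)))"
    by (simp flip: of_nat_mult power_add add: mult_2[symmetric] mult_ac)
  finally show ?case by simp
qed

lemma k_dvd_q_minus_1: "k dvd q - 1"
  using dvd_level_minus_1[OF kd, of J] J_pos mJ by simp

lemma level_char_J: "level_char k d0 J j = kchar k j"
proof -
  have "p ^ (d0 * 2 ^ J) = q" using mJ by simp
  then show ?thesis by (simp add: level_char_def kchar_def fun_eq_iff)
qed

lemma gauss_period_trace_zero_elt:
  assumes "J = 1"
  shows "of_nat k * cayley_eig (kth_powers k) trace_zero_elt = - 1 + of_nat (k - 1) * of_nat (p ^ d0)"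
proof -
  define \<eta> where "\<eta> = level_char k d0 (Suc 0) (Suc 0) trace_zero_elt"
  have "cnj (kchar k j trace_zero_elt) * gauss_sum (kchar k j) = of_nat (p ^ d0)" if "0 < j" "j < k" for j
  proof -
    have "kchar k j trace_zero_elt = \<eta> ^ j"
      using level_char_J[of j] level_char_power[of k d0 "Suc 0" j] assms by (simp add: \<eta>_def)
    moreover have "gauss_sum (kchar k j) = of_nat (p ^ d0) * \<eta> ^ j"
      using gauss_sum_level_1[OF that] level_char_J[of j] sub_gauss_sum_m mJ assms by (simp add: \<eta>_def)
    moreover have "cnj (\<eta> ^ j) * \<eta> ^ j = 1"
      using complex_norm_square[of "\<eta> ^ j"] by (simp add: \<eta>_def norm_power mult.commute)
    ultimately show ?thesis by (simp add: mult_ac)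
  qed
  then show ?thesis
    using gauss_period_expansion_nontrivial[OF k_pos k_dvd_q_minus_1 trace_zero_elt(2)] k_pos
    by (simp add: of_nat_diff)
qed

lemma gauss_period_1:
  assumes "J \<ge> 2"
  shows "of_nat k * cayley_eig (kth_powers k) 1 = - 1 - of_nat (k - 1) * of_nat (p ^ (d0 * 2 ^ (J - 1)))"
proof -
  obtain i where i: "J = i + 2" using assms by (metis add.commute le_Suc_ex)
  have "gauss_sum (kchar k j) = - of_nat (p ^ (d0 * 2 ^ (J - 1)))" if "0 < j" "j < k" for j
    using gauss_sum_level_ge_2[of i j] that i level_char_J[of j] sub_gauss_sum_m mJ by simp
  then show ?thesis
    using gauss_period_expansion_nontrivial[OF k_pos k_dvd_q_minus_1 one_neq_zero] k_pos
    by (simp add: kchar_def of_nat_diff)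
qed

lemma exists_large_gauss_period:
  obtains b where "of_nat k * cayley_eig (kth_powers k) b = - 1 + of_nat (k - 1) * of_nat (p ^ (d0 * 2 ^ (J - 1)))
       \<or> of_nat k * cayley_eig (kth_powers k) b = - 1 - of_nat (k - 1) * of_nat (p ^ (d0 * 2 ^ (J - 1)))"
  using gauss_period_trace_zero_elt gauss_period_1 J_pos by (cases "J = 1") auto

end

section \<open>Spectra of Cayley graphs on finite fields\<close>

context finite_field_primitive
begin

lemma sum_cayley_neighbours:
  fixes u :: 'a and S :: "'a set" and v :: "'a \<Rightarrow> complex"
  shows "(\<Sum>w\<in>{w. w - u \<in> S}. v w) = (\<Sum>s\<in>S. v (u + s))"
  by (rule sum.reindex_bij_witness[of _ "\<lambda>s. u + s" "\<lambda>w. w - u"]) auto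

definition fourier :: "('a \<Rightarrow> complex) \<Rightarrow> 'a \<Rightarrow> complex" where
  "fourier v b = (\<Sum>x\<in>UNIV. v x * add_char m (- (b * x)))"

lemma fourier_inversion: "(\<Sum>b\<in>UNIV. fourier v b * add_char m (b * u)) = of_nat q * v u"
proof -
  have "add_char m (- (b * x)) * add_char m (b * u) = add_char m (b * (u - x))" for b x
    using add_char_m_add[of "- (b * x)" "b * u"] by (simp add: algebra_simps)
  then have "(\<Sum>b\<in>UNIV. fourier v b * add_char m (b * u))
      = (\<Sum>b\<in>UNIV. \<Sum>x\<in>UNIV. v x * add_char m (b * (u - x)))"
    unfolding fourier_def sum_distrib_right by (simp add: mult.assoc)
  also have "\<dots> = (\<Sum>x\<in>UNIV. v x * (\<Sum>b\<in>UNIV. add_char m (b * (u - x))))"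
    by (subst sum.swap) (simp add: sum_distrib_left)
  also have "\<dots> = (\<Sum>x\<in>UNIV. if x = u then v x * of_nat q else 0)"
    by (intro sum.cong refl) (auto simp: sum_add_char_UNIV)
  also have "\<dots> = of_nat q * v u" by simp
  finally show ?thesis .
qed

lemma fourier_cayley_eigenvector:
  assumes ev: "\<And>u. (\<Sum>s\<in>S. v (u + s)) = mu * v u"
  shows "mu * fourier v b = cayley_eig S b * fourier v b"
proof -
  have "mu * fourier v b = (\<Sum>x\<in>UNIV. (\<Sum>s\<in>S. v (x + s)) * add_char m (- (b * x)))"
    by (simp add: fourier_def ev sum_distrib_left mult_ac)
  also have "\<dots> = (\<Sum>s\<in>S. \<Sum>x\<in>UNIV. v (x + s) * add_char m (- (b * x)))"
    by (simp add: sum_distrib_right sum.swap[of _ UNIV S])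
  also have "\<dots> = (\<Sum>s\<in>S. \<Sum>y\<in>UNIV. v y * add_char m (- (b * (y - s))))"
  proof (rule sum.cong[OF refl])
    fix s
    show "(\<Sum>x\<in>UNIV. v (x + s) * add_char m (- (b * x))) = (\<Sum>y\<in>UNIV. v y * add_char m (- (b * (y - s))))"
      by (rule sum.reindex_bij_witness[of _ "\<lambda>y. y - s" "\<lambda>x. x + s"]) auto
  qed
  also have "\<dots> = (\<Sum>s\<in>S. add_char m (b * s) * fourier v b)"
  proof (rule sum.cong[OF refl])
    fix s
    have "add_char m (- (b * (y - s))) = add_char m (b * s) * add_char m (- (b * y))" for y
      using add_char_m_add[of "b * s" "- (b * y)"] by (simp add: algebra_simps)
    then show "(\<Sum>y\<in>UNIV. v y * add_char m (- (b * (y - s)))) = add_char m (b * s) * fourier v b"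
      by (simp add: fourier_def sum_distrib_left mult_ac)
  qed
  also have "\<dots> = cayley_eig S b * fourier v b" by (simp add: cayley_eig_def sum_distrib_right)
  finally show ?thesis .
qed

text \<open>Every eigenvalue of a Cayley graph on \<open>(\<bbbF>\<^sub>q, +)\<close> is a character sum: an eigenvector has a
  nonzero Fourier coefficient, by Fourier inversion, and that coefficient singles out the character.\<close>
lemma cayley_eigenvalue_cases:
  fixes S :: "'a set"
  assumes "adj_eigenvalue (\<lambda>u w. w - u \<in> S) mu"
  shows "\<exists>b. mu = cayley_eig S b"
proof -
  obtain v :: "'a \<Rightarrow> complex" where v0: "v \<noteq> (\<lambda>_. 0)"
    and ev: "\<And>u. (\<Sum>w\<in>{w. w - u \<in> S}. v w) = mu * v u"
    using assms unfolding adj_eigenvalue_def by blast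
  obtain u where "v u \<noteq> 0" using v0 by auto
  then have "(\<Sum>b\<in>UNIV. fourier v b * add_char m (b * u)) \<noteq> 0"
    using fourier_inversion[of v u] p_pos by simp
  then obtain b where "fourier v b \<noteq> 0" by (metis (no_types, lifting) mult_eq_0_iff sum.neutral)
  moreover have "mu * fourier v b = cayley_eig S b * fourier v b"
    using ev sum_cayley_neighbours by (intro fourier_cayley_eigenvector) simp
  ultimately show ?thesis by auto
qed

lemma adj_eigenvalue_cayley_eig:
  fixes S :: "'a set"
  shows "adj_eigenvalue (\<lambda>u w. w - u \<in> S) (cayley_eig S b)"
proof -
  define v where "v x = add_char m (b * x)" for x
  have "v \<noteq> (\<lambda>_. 0)"
  proof
    assume "v = (\<lambda>_. 0)"
    then have "v 0 = 0" by simp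
    then show False by (simp add: v_def)
  qed
  moreover have "(\<Sum>w\<in>{w. w - u \<in> S}. v w) = cayley_eig S b * v u" for u
  proof -
    have "(\<Sum>w\<in>{w. w - u \<in> S}. v w) = (\<Sum>s\<in>S. v (u + s))" by (rule sum_cayley_neighbours)
    also have "\<dots> = (\<Sum>s\<in>S. add_char m (b * u) * add_char m (b * s))"
      by (simp add: v_def distrib_left add_char_m_add)
    also have "\<dots> = cayley_eig S b * v u" by (simp add: cayley_eig_def v_def sum_distrib_left mult.commute)
    finally show ?thesis .
  qed
  ultimately show ?thesis unfolding adj_eigenvalue_def by blast
qed

lemma regular_cayley:
  fixes S :: "'a set"
  shows "regular_graph (\<lambda>u w. w - u \<in> S) (card S)"
proof -
  have "card {w. w - u \<in> S} = card S" for u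
    by (rule bij_betw_same_card[of "\<lambda>w. w - u"]) (rule bij_betw_byWitness[of _ "\<lambda>s. s + u"], auto)
  then show ?thesis by (simp add: regular_graph_def)
qed

lemma cayley_eig_zero: "cayley_eig S 0 = of_nat (card S)" by (simp add: cayley_eig_def)

lemma cayley_eig_compl:
  assumes "b \<noteq> 0" "R \<subseteq> UNIV - {0}"
  shows "cayley_eig (UNIV - {0} - R) b = - 1 - cayley_eig R b"
proof -
  have "cayley_eig (UNIV - {0}) b = cayley_eig R b + cayley_eig (UNIV - {0} - R) b"
    unfolding cayley_eig_def using assms(2) by (metis add.commute finite sum.subset_diff)
  moreover have "cayley_eig (UNIV - {0}) b = - 1"
    using sum_add_char_nonzero[of b] assms(1) by (simp add: cayley_eig_def mult.commute)
  ultimately show ?thesis by (simp add: algebra_simps eq_diff_eq)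
qed

lemma ramanujan_cayleyI:
  fixes S :: "'a set"
  assumes conn: "connected_graph (\<lambda>u w. w - u \<in> S)"
    and bnd: "\<And>b. b \<noteq> 0 \<Longrightarrow> cmod (cayley_eig S b) \<noteq> real (card S) \<Longrightarrow> cmod (cayley_eig S b) \<le> 2 * sqrt (real (card S) - 1)"
  shows "ramanujan (\<lambda>u w. w - u \<in> S)"
  unfolding ramanujan_def
proof (intro conjI exI[of _ "card S"] allI impI)
  show "connected_graph (\<lambda>u w. w - u \<in> S)" by (rule conn)
  show "regular_graph (\<lambda>u w. w - u \<in> S) (card S)" by (rule regular_cayley)
  fix mu assume a: "adj_eigenvalue (\<lambda>u w. w - u \<in> S) mu \<and> cmod mu \<noteq> real (card S)"
  then obtain b where b: "mu = cayley_eig S b" using cayley_eigenvalue_cases by blast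
  show "cmod mu \<le> 2 * sqrt (real (card S) - 1)"
  proof (cases "b = 0")
    case True then show ?thesis using a b by (simp add: cayley_eig_zero)
  next
    case False then show ?thesis using a b bnd by simp
  qed
qed

lemma ramanujan_cayleyD:
  fixes S :: "'a set"
  assumes "ramanujan (\<lambda>u w. w - u \<in> S)" "cmod (cayley_eig S b) \<noteq> real (card S)"
  shows "cmod (cayley_eig S b) \<le> 2 * sqrt (real (card S) - 1)"
proof -
  obtain N where N: "regular_graph (\<lambda>u w. w - u \<in> S) N"
    and ev: "\<And>mu. adj_eigenvalue (\<lambda>u w. w - u \<in> S) mu \<and> cmod mu \<noteq> real N \<Longrightarrow> cmod mu \<le> 2 * sqrt (real N - 1)"
    using assms(1) unfolding ramanujan_def by blast
  have "N = card S" using N regular_cayley[of S] by (simp add: regular_graph_def)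
  then show ?thesis using ev[of "cayley_eig S b"] adj_eigenvalue_cayley_eig[of S b] assms(2) by simp
qed

end

section \<open>Generalized Paley graphs\<close>

context finite_field_primitive
begin

lemma gpaley_eq_cayley: "gpaley k = (\<lambda>u w. w - u \<in> (kth_powers k :: 'a set))"
  by (intro ext) (simp add: gpaley_def)

lemma gpaley_bar_eq_cayley: "gpaley_bar k = (\<lambda>u w. w - u \<in> UNIV - {0::'a} - kth_powers k)"
  by (intro ext) (simp add: gpaley_bar_def)

text \<open>The component of 0 is a subfield containing \<open>0 \<union> R\<^sub>k\<close>; it cannot be proper, since a proper
  subfield has at most \<open>\<surd>q\<close> elements.\<close>
lemma connected_gpaley:
  assumes k: "k > 0" "k dvd q - 1"
    and big: "q < ((q - 1) div k + 1) * ((q - 1) div k + 1)"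
  shows "connected_graph (gpaley k :: 'a \<Rightarrow> 'a \<Rightarrow> bool)"
  unfolding gpaley_eq_cayley
proof (rule connected_cayleyI)
  define C where "C = {x. (\<lambda>u w. w - u \<in> (kth_powers k :: 'a set))\<^sup>*\<^sup>* 0 x}"
  have one: "1 \<in> (kth_powers k :: 'a set)" by (auto simp: kth_powers_def intro: exI[of _ 1])
  note closed = cayley_reachable_subfield[OF kth_powers_mult one, folded C_def]
  have "insert 0 (kth_powers k) \<subseteq> C"
    using cayley_reach_step by (auto simp: C_def)
  then have "card (insert 0 (kth_powers k :: 'a set)) \<le> card C" by (intro card_mono) auto
  moreover have "card (insert 0 (kth_powers k :: 'a set)) = (q - 1) div k + 1"
    using card_kth_powers[OF k] by (simp add: kth_powers_def)
  ultimately have le: "(q - 1) div k + 1 \<le> card C" by simp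
  have "C = UNIV"
  proof (rule ccontr)
    assume "C \<noteq> UNIV"
    then have "card C * card C \<le> q"
      using card_proper_subfield_square_le[OF closed] card_q by simp
    then show False using big mult_le_mono[OF le le] by linarith
  qed
  then show "(\<lambda>u w. w - u \<in> (kth_powers k :: 'a set))\<^sup>*\<^sup>* 0 x" for x by (auto simp: C_def)
qed

lemma ramanujan_gpaleyI:
  assumes k: "k > 0" "k dvd q - 1"
    and conn: "connected_graph (gpaley k :: 'a \<Rightarrow> 'a \<Rightarrow> bool)"
    and margin: "(1 + (real k - 1) * sqrt q)\<^sup>2 \<le> 4 * k * (real q - 1 - k)"
  shows "ramanujan (gpaley k :: 'a \<Rightarrow> 'a \<Rightarrow> bool)"
  unfolding gpaley_eq_cayley
proof (rule ramanujan_cayleyI)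
  show "connected_graph (\<lambda>u w. w - u \<in> (kth_powers k :: 'a set))"
    using conn unfolding gpaley_eq_cayley .
  fix b :: 'a
  assume b: "b \<noteq> 0"
  define a where "a = cmod (cayley_eig (kth_powers k) b)"
  have "k * a \<le> 1 + (real k - 1) * sqrt q"
    using norm_gauss_period_le[OF k b] by (simp add: a_def)
  then have "(k * a)\<^sup>2 \<le> (1 + (real k - 1) * sqrt q)\<^sup>2"
    by (intro power_mono) (simp_all add: a_def)
  then have "(k * a)\<^sup>2 \<le> 4 * k * (real q - 1 - k)"
    using margin by linarith
  then have "a \<le> 2 * sqrt ((real q - 1 - k) / k)"
    using k(1) by (subst le_two_sqrt_div_iff) (auto simp: a_def)
  also have "(real q - 1 - k) / k = real (card (kth_powers k :: 'a set)) - 1"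
    using real_card_kth_powers[OF k] k(1) by (simp add: field_simps)
  finally show "a \<le> 2 * sqrt (real (card (kth_powers k :: 'a set)) - 1)" .
qed

lemma ramanujan_gpaley_barI:
  assumes k: "k > 1" "k dvd q - 1"
    and margin: "((real k - 1) * (1 + sqrt q))\<^sup>2 \<le> 4 * k * ((real k - 1) * (real q - 1) - k)"
  shows "ramanujan (gpaley_bar k :: 'a \<Rightarrow> 'a \<Rightarrow> bool)"
  unfolding gpaley_bar_eq_cayley
proof (rule ramanujan_cayleyI)
  have kp: "k > 0" using k by simp
  show "connected_graph (\<lambda>u w. w - u \<in> UNIV - {0::'a} - kth_powers k)"
  proof (rule connected_cayley_of_card)
    have "card (kth_powers k :: 'a set) \<le> (q - 1) div 2"
      using card_kth_powers[OF kp k(2)] k(1) by (simp add: div_le_mono2)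
    moreover have "card (insert 0 (UNIV - {0::'a} - kth_powers k)) = (q - 1) - card (kth_powers k :: 'a set) + 1"
      using card_non_kth_powers by simp
    ultimately show "2 * card (insert 0 (UNIV - {0::'a} - kth_powers k)) > card (UNIV :: 'a set)"
      using q_ge_2 card_q by linarith
  qed
  fix b :: 'a
  assume b: "b \<noteq> 0"
  define a where "a = cmod (cayley_eig (UNIV - {0} - kth_powers k) b)"
  have "cayley_eig (UNIV - {0} - kth_powers k) b = - (1 + cayley_eig (kth_powers k) b)"
    using cayley_eig_compl[OF b kth_powers_subset_nonzero] by simp
  then have "a = cmod (1 + cayley_eig (kth_powers k) b)"
    unfolding a_def by (simp only: norm_minus_cancel)
  then have "k * a \<le> (real k - 1) * (1 + sqrt q)"
    using norm_gauss_period_plus_1_le[OF kp k(2) b] k(1) by (simp add: of_nat_diff)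
  then have "(k * a)\<^sup>2 \<le> ((real k - 1) * (1 + sqrt q))\<^sup>2"
    by (intro power_mono) (simp_all add: a_def)
  then have "(k * a)\<^sup>2 \<le> 4 * k * ((real k - 1) * (real q - 1) - k)"
    using margin by linarith
  then have "a \<le> 2 * sqrt (((real k - 1) * (real q - 1) - k) / k)"
    using kp by (subst le_two_sqrt_div_iff) (auto simp: a_def)
  also have "((real k - 1) * (real q - 1) - k) / k = real (card (UNIV - {0::'a} - kth_powers k)) - 1"
    using real_card_non_kth_powers[OF kp k(2)] kp by (simp add: field_simps)
  finally show "a \<le> 2 * sqrt (real (card (UNIV - {0::'a} - kth_powers k)) - 1)" .
qed

lemma not_ramanujan_gpaley:
  assumes k: "k \<ge> 6" "k dvd q - 1" and M: "q = M * M" "k \<le> M"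
    and eig: "of_nat k * cayley_eig (kth_powers k) b = - 1 + of_nat (k - 1) * of_nat M
      \<or> of_nat k * cayley_eig (kth_powers k) b = - 1 - of_nat (k - 1) * of_nat M"
  shows "\<not> ramanujan (gpaley k :: 'a \<Rightarrow> 'a \<Rightarrow> bool)"
proof
  assume ram: "ramanujan (gpaley k :: 'a \<Rightarrow> 'a \<Rightarrow> bool)"
  have kp: "k > 0" using k by simp
  define a where "a = cmod (cayley_eig (kth_powers k) b)"
  have card: "real (card (kth_powers k :: 'a set)) = (real M * real M - 1) / k"
    using real_card_kth_powers[OF kp k(2)] M(1) by simp
  have kM1: "(real k - 1) * real M \<ge> 1"
  proof -
    have "(real k - 1) * real M \<ge> 5 * 6" using k M by (intro mult_mono) auto
    then show ?thesis by simp
  qed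
  have "1 \<le> (k - 1) * M" using k M by simp
  moreover have "of_nat k * cayley_eig (kth_powers k) b = - 1 + of_nat ((k - 1) * M)
      \<or> of_nat k * cayley_eig (kth_powers k) b = - 1 - of_nat ((k - 1) * M)"
    using eig by simp
  moreover have "real k * a = cmod (of_nat k * cayley_eig (kth_powers k) b)" by (simp add: a_def norm_mult)
  moreover have "real ((k - 1) * M) = (real k - 1) * real M" using kp by (simp add: of_nat_diff)
  ultimately have bounds: "(real k - 1) * real M - 1 \<le> k * a" "k * a \<le> (real k - 1) * real M + 1"
    using cmod_minus_1_plus_minus_bounds by metis+
  have "a \<noteq> real (card (kth_powers k :: 'a set))"
  proof
    assume "a = real (card (kth_powers k :: 'a set))"
    then have "k * a = real M * real M - 1" using card kp by simp
    moreover have "(real k - 1) * real M \<le> (real M - 1) * real M"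
      using M(2) by (intro mult_right_mono) auto
    moreover have "(real M - 1) * real M = real M * real M - real M"
      by (simp add: algebra_simps)
    moreover have "real M \<ge> 6" using M(2) k(1) by simp
    ultimately show False using bounds by linarith
  qed
  then have "a \<le> 2 * sqrt (real (card (kth_powers k :: 'a set)) - 1)"
    using ramanujan_cayleyD[OF ram[unfolded gpaley_eq_cayley]] by (simp add: a_def)
  also have "real (card (kth_powers k :: 'a set)) - 1 = (real M ^ 2 - 1 - k) / k"
    using card kp by (simp add: field_simps power2_eq_square)
  finally have "(real k * a)\<^sup>2 \<le> 4 * real k * (real M ^ 2 - 1 - real k)"
    using kp by (subst (asm) le_two_sqrt_div_iff) (auto simp: a_def)
  moreover have "((real k - 1) * real M - 1)\<^sup>2 \<le> (real k * a)\<^sup>2"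
    using bounds kM1 by (intro power_mono) auto
  moreover have "((real k - 1) * real M - 1)\<^sup>2 > 4 * real k * (real M ^ 2 - 1 - real k)"
    using gpaley_margin_fails[of "real k" "real M"] k M by simp
  ultimately show False by linarith
qed

lemma connected_gpaley_of_le_sqrt:
  assumes k: "k > 0" "k dvd q - 1" and M: "q = M * M" "k \<le> M" "M \<ge> 3"
  shows "connected_graph (gpaley k :: 'a \<Rightarrow> 'a \<Rightarrow> bool)"
proof (rule connected_gpaley[OF k])
  define a where "a = (q - 1) div k"
  have ak: "a * k = M * M - 1" using k(2) M(1) by (simp add: a_def)
  have "a \<ge> M"
  proof (rule ccontr)
    assume "\<not> a \<ge> M"
    then have "a \<le> M - 1" by simp
    then have "a * k \<le> (M - 1) * k" by (rule mult_right_mono) simp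
    also have "\<dots> \<le> (M - 1) * M" using M(2) by (rule mult_left_mono) simp
    also have "\<dots> = M * M - M" by (simp add: algebra_simps)
    finally have "a * k \<le> M * M - M" .
    moreover have "M \<le> M * M" using M(3) by simp
    ultimately show False using ak M(3) by arith
  qed
  then have "M * M < (a + 1) * (a + 1)" by (intro mult_strict_mono) auto
  then show "q < ((q - 1) div k + 1) * ((q - 1) div k + 1)"
    using M(1) by (simp add: a_def)
qed

lemma ramanujan_paley:
  assumes "q mod 4 = 1"
  shows "ramanujan (gpaley 2 :: 'a \<Rightarrow> 'a \<Rightarrow> bool)" "ramanujan (gpaley_bar 2 :: 'a \<Rightarrow> 'a \<Rightarrow> bool)"
proof -
  have q5: "q \<ge> 5" using q_ge_2 assms by presburger
  have k: "2 dvd q - 1" using assms by presburger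
  have "real q \<ge> 5" using q5 by linarith
  then have margin: "(1 + (real 2 - 1) * sqrt q)\<^sup>2 \<le> 4 * 2 * (real q - 1 - 2)"
    using gpaley_margin[of "sqrt q" 2] by simp
  have "connected_graph (gpaley 2 :: 'a \<Rightarrow> 'a \<Rightarrow> bool)"
  proof (rule connected_gpaley)
    define a where "a = (q - 1) div 2 + 1"
    have "a \<ge> 3" "2 * a \<ge> q" using q5 k by (auto simp: a_def)
    then show "q < ((q - 1) div 2 + 1) * ((q - 1) div 2 + 1)"
      unfolding a_def[symmetric] using mult_le_mono1[of 3 a a] by linarith
  qed (use k in auto)
  then show "ramanujan (gpaley 2 :: 'a \<Rightarrow> 'a \<Rightarrow> bool)"
    using k margin by (intro ramanujan_gpaleyI) auto
  show "ramanujan (gpaley_bar 2 :: 'a \<Rightarrow> 'a \<Rightarrow> bool)"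
    using k margin by (intro ramanujan_gpaley_barI) auto
qed

lemma semiprimitive_sqrt:
  assumes m: "even m" and t: "t > 0" "t dvd m div 2" "k dvd p ^ t + 1"
    and k_ne: "k \<noteq> p ^ (m div 2) + 1"
  shows "q = p ^ (m div 2) * p ^ (m div 2)" and "k \<le> p ^ (m div 2)"
proof -
  show "q = p ^ (m div 2) * p ^ (m div 2)" using m by (simp add: power_add[symmetric] flip: mult_2)
  have "m div 2 > 0" using m m_pos by (auto elim!: evenE)
  then show "k \<le> p ^ (m div 2)" using semiprimitive_k_le[OF prime_p t(1,2) _ t(3) k_ne] by simp
qed

lemma not_ramanujan_gpaley_semiprimitive:
  assumes k: "k \<ge> 6" "k dvd q - 1" and m: "even m"
    and t: "t > 0" "t dvd m div 2" "k dvd p ^ t + 1" and k_ne: "k \<noteq> p ^ (m div 2) + 1"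
  shows "\<not> ramanujan (gpaley k :: 'a \<Rightarrow> 'a \<Rightarrow> bool)"
proof -
  have "m div 2 > 0" using m m_pos by (auto elim!: evenE)
  then obtain d0 J where dJ: "d0 > 0" "J \<ge> 1" "2 * (m div 2) = d0 * 2 ^ J" "k dvd p ^ d0 + 1"
    using semiprimitive_level_decomp[OF t(1,2) _ t(3)] by blast
  have mJ: "m = d0 * 2 ^ J" using dJ(3) m by simp
  interpret S: semiprimitive p m g k d0 J
    by unfold_locales (use k dJ mJ in auto)
  have "m div 2 = d0 * 2 ^ (J - 1)"
    using mJ dJ(2) by (cases J) auto
  then obtain b where "of_nat k * cayley_eig (kth_powers k) b = - 1 + of_nat (k - 1) * of_nat (p ^ (m div 2))
      \<or> of_nat k * cayley_eig (kth_powers k) b = - 1 - of_nat (k - 1) * of_nat (p ^ (m div 2))"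
    using S.exists_large_gauss_period by metis
  then show ?thesis
    using not_ramanujan_gpaley[OF k semiprimitive_sqrt[OF m t k_ne]] by simp
qed

lemma ramanujan_gpaley_semiprimitive:
  assumes k: "k > 2" "k dvd q - 1" and m: "even m"
    and t: "t > 0" "t dvd m div 2" "k dvd p ^ t + 1" and k_ne: "k \<noteq> p ^ (m div 2) + 1"
  shows "ramanujan (gpaley k :: 'a \<Rightarrow> 'a \<Rightarrow> bool) \<longleftrightarrow> k \<le> 5"
    and "ramanujan (gpaley_bar k :: 'a \<Rightarrow> 'a \<Rightarrow> bool)"
proof -
  have kp: "k > 0" using k by simp
  define M where "M = p ^ (m div 2)"
  note qM = semiprimitive_sqrt(1)[OF m t k_ne, folded M_def]
  note kM = semiprimitive_sqrt(2)[OF m t k_ne, folded M_def]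
  have sqrt_q: "sqrt q = M" using qM by (simp add: real_sqrt_mult)
  show "ramanujan (gpaley_bar k :: 'a \<Rightarrow> 'a \<Rightarrow> bool)"
    using k gpaley_bar_margin[of "real k" "real M"] kM
    by (intro ramanujan_gpaley_barI) (auto simp: sqrt_q qM power2_eq_square)
  have "ramanujan (gpaley k :: 'a \<Rightarrow> 'a \<Rightarrow> bool)" if "k \<le> 5"
  proof -
    have "M \<ge> 7" if "k = 5"
      using small_semiprimitive_iff[OF m_pos m t(1,2) k(1) t(3) k_ne] \<open>k \<le> 5\<close> that
        power_half_ge_7[OF prime_p, of m] by (auto simp: M_def)
    then have "(1 + (real k - 1) * real M)\<^sup>2 \<le> 4 * k * ((real M)\<^sup>2 - 1 - k)"
      using gpaley_margin[of "real M" k] k(1) \<open>k \<le> 5\<close> kM by fastforce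
    then show ?thesis
      using connected_gpaley_of_le_sqrt[OF kp k(2) qM kM] kM k(1)
      by (intro ramanujan_gpaleyI[OF kp k(2)]) (auto simp: sqrt_q qM power2_eq_square)
  qed
  then show "ramanujan (gpaley k :: 'a \<Rightarrow> 'a \<Rightarrow> bool) \<longleftrightarrow> k \<le> 5"
    using not_ramanujan_gpaley_semiprimitive[OF _ k(2) m t k_ne] by fastforce
qed

end

theorem theorem4p1:
  fixes p m k :: nat
  assumes "prime p" and "m > 0" and "card (UNIV :: 'a::{finite,field} set) = p ^ m"
    and "k dvd p ^ m - 1"
    and "semiprimitive_pair k p m"
  shows "(ramanujan (gpaley k :: 'a \<Rightarrow> 'a \<Rightarrow> bool) \<longleftrightarrow>
           k = 2 \<or>
           (even m \<and>
             ((k = 3 \<and> p = 2 \<and> m \<ge> 4) \<or>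
              (k = 3 \<and> p \<noteq> 2 \<and> p mod 3 = 2 \<and> m \<ge> 2) \<or>
              (k = 4 \<and> p = 3 \<and> m \<ge> 4) \<or>
              (k = 4 \<and> p \<noteq> 3 \<and> p mod 4 = 3 \<and> m \<ge> 2) \<or>
              (k = 5 \<and> p = 2 \<and> m \<ge> 8 \<and> 4 dvd m) \<or>
              (k = 5 \<and> p \<noteq> 2 \<and> (p mod 5 = 2 \<or> p mod 5 = 3) \<and> m \<ge> 4 \<and> 4 dvd m) \<or>
              (k = 5 \<and> p mod 5 = 4 \<and> m \<ge> 2))))
         \<and> ramanujan (gpaley_bar k :: 'a \<Rightarrow> 'a \<Rightarrow> bool)"
proof -
  obtain g :: 'a where "g \<noteq> 0" "\<forall>x. x \<noteq> 0 \<longrightarrow> (\<exists>i. x = g ^ i)"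
    using finite_field_has_generator by blast
  then interpret F: finite_field_primitive p m g
    using assms(1-3) by unfold_locales auto
  from assms(5) consider (paley) "k = 2" "p ^ m mod 4 = 1"
    | (semiprimitive) t where "k > 2" "even m" "t > 0" "t dvd m div 2" "k dvd p ^ t + 1"
        "k \<noteq> p ^ (m div 2) + 1"
    unfolding semiprimitive_pair_def by blast
  then show ?thesis
  proof cases
    case paley
    then show ?thesis using F.ramanujan_paley by simp
  next
    case semiprimitive
    then show ?thesis
      using F.ramanujan_gpaley_semiprimitive[OF _ assms(4)] small_semiprimitive_iff[OF assms(2)]
      by auto
  qed
qed

end
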